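(* Let $\mathrm{T}_\infty$ be the random infinite binary plane tree, with its corner labelling $S$ and total order $\prec$ on corners, defined in the context. Then almost surely, for every corner $\kappa$ of $\mathrm{T}_\infty$ there exists a corner $\kappa'$ with $\kappa\prec\kappa'$ and $$S(\kappa')\le S(\kappa)-6\cdot\mathbf 1\{\kappa\prec\rho\preceq\kappa'\}.$$ In particular, almost surely no bud corner $\kappa$ of $\mathrm{T}_\infty$ has $\sigma(\kappa)=-\infty$.
   Context: Plane trees. A plane tree is a rooted tree with a linear order on the children of each node. Such a tree is viewed as a planar map. A binary (plane) tree is one in which every node has degree $1$ (a bud) or degree $3$ (an internal node). A corner is a pair $(e,e')$ of edges such that $e'$ immediately follows $e$ in the counterclockwise walk around the unique face of the tree. This walk keeps the face on its left. The corner's vertex is the common endpoint of $e$ and $e'$. A bud corner is a corner at a bud; every other corner is an internal corner. The root corner $\rho$ is the corner at the root vertex whose second edge is the root edge. The complete binary tree. Let $\mathbb T$ be the complete infinite binary tree with vertex set $\bigcup_{i\ge0}\{-1,1\}^i$. Its root is the empty string $\emptyset$. The left child of $w$ is $w(-1)$ and the right child is $w1$. Let $A\subseteq\mathbb T$ be a subtree containing $\emptyset$ in which every node has $0$ or $2$ children, and in which $\emptyset$ has $2$ children. Then $A$ determines a binary plane tree $\mathrm T(A)$ as follows: - delete $\emptyset$ and join $1$ and $-1$ by an edge; - the root is $1$ and the root edge is $(1,-1)$; - the children of $1$ are, in order, $-1$, then $(1,-1)$ and $(1,1)$ if they are present in $A$; - every other node $w$ has children, in order, $w(-1)$ and $w1$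 if they are present in $A$. The random tree. Let $(X_i)_{i\ge1}$ be i.i.d. with $P(X_i=1)=P(X_i=-1)=1/2$, and set $Y_i=-X_i$. Let $P=\{(X_1,\dots,X_i):i\ge0\}$. Let $(B_i)_{i\ge1}$ be i.i.d. Galton–Watson trees, independent of the $X_i$, in which each node has $0$ or $2$ children with probability $1/2$ each. For each $i\ge1$, place a copy of $B_i$ in $\mathbb T$ rooted at the node $(X_1,\dots,X_{i-1},Y_i)$. Let $A$ be the union of $P$ and these copies, and let $\mathrm T_\infty=\mathrm T(A)$. This is a critical binary Galton–Watson tree conditioned to be infinite. Corner order and labels. The counterclockwise walk around $\mathrm T_\infty$ visits each corner exactly once, in a bi-infinite sequence. Write $\prec$ for the induced total order, where $\kappa\prec\kappa'$ means $\kappa$ is visited before $\kappa'$. For a corner $\kappa$, let $\delta(\kappa)=-1$ if $\kappa$ is internal and $\delta(\kappa)=3$ if $\kappa$ is a bud corner. The labelling $S$ is the unique function from corners to $\mathbb Z$ such that: - $S(\rho)=-4\cdot\mathbf 1\{\rho\text{ is a bud corner}\}$; - for every corner $\kappa$ with immediate successor $\kappa'$ in the walk, $S(\kappa')=S(\kappa)+\delta(\kappa)-6\cdot\mathbf 1\{\kappa'=\rho\}$. Attachment corners. For a bud corner $\kappa$, $\sigma(\kappa)$ is the $\prec$-first corner $\kappa'\succ\kappa$ with $S(\kappa')\le S(\kappa)-6\cdot\mathbf 1\{\kappa\prec\rho\preceq\kappa'\}$. If no such corner exists, $\sigma(\kappa)=-\infty$. *)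

theory Defs
  imports "HOL-Probability.Probability"
begin

text \<open>A vertex of the complete binary tree is a list of booleans; True encodes 1,
  False encodes -1; the list [] is the root (empty string). The left child of w is
  w @ [False], the right child is w @ [True].\<close>

text \<open>Vertices of T(A) are the nonempty lists in A. The root is [True] (the node 1).\<close>

definition children :: "bool list set \<Rightarrow> bool list \<Rightarrow> bool list list" where
  "children A v =
     (if v = [True]
      then [False] # (if [True, False] \<in> A then [[True, False], [True, True]] else [])
      else if v @ [False] \<in> A then [v @ [False], v @ [True]] else [])"

definition nch :: "bool list set \<Rightarrow> bool list \<Rightarrow> nat" where
  "nch A v = length (children A v)"

text \<open>Parent of a non-root vertex of T(A), and its (1-based) position among the
  children of the parent.\<close>
definition tparent :: "bool list \<Rightarrow> bool list" where
  "tparent v = (if v = [False] then [True] else butlast v)"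

definition cidx :: "bool list \<Rightarrow> nat" where
  "cidx v = (if v = [False] then 1
             else if butlast v = [True] then (if last v then 3 else 2)
             else (if last v then 2 else 1))"

definition tdegree :: "bool list set \<Rightarrow> bool list \<Rightarrow> nat" where
  "tdegree A v = (if v = [True] then nch A v else nch A v + 1)"

text \<open>For a non-root vertex v with children c_1..c_k, the corner (v, j),
  0 <= j <= k, is the corner between the edge to c_j (or the parent edge if j = 0)
  and the edge to c_(j+1) (or the parent edge if j = k). For the root with children
  c_1..c_k, the corner (root, j), 1 <= j <= k, is the corner between the edges to
  c_j and c_(j+1) (indices modulo k). A corner (e, e') is entered via e and left via e'.\<close>
definition corners :: "bool list set \<Rightarrow> (bool list \<times> nat) set" where
  "corners A = {(v, j). v \<in> A \<and> v \<noteq> [] \<and> j \<le> nch A v \<and> (v = [True] \<longrightarrow> 1 \<le> j)}"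

definition is_bud_corner :: "bool list set \<Rightarrow> bool list \<times> nat \<Rightarrow> bool" where
  "is_bud_corner A \<kappa> \<longleftrightarrow> \<kappa> \<in> corners A \<and> tdegree A (fst \<kappa>) = 1"

definition delta :: "bool list set \<Rightarrow> bool list \<times> nat \<Rightarrow> int" where
  "delta A \<kappa> = (if is_bud_corner A \<kappa> then 3 else -1)"

text \<open>The root corner: at the root, second edge = root edge (edge to c_1 = -1).\<close>
definition rho :: "bool list set \<Rightarrow> bool list \<times> nat" where
  "rho A = ([True], nch A [True])"

text \<open>Immediate successor of a corner in the counterclockwise contour walk.\<close>
definition csucc :: "bool list set \<Rightarrow> bool list \<times> nat \<Rightarrow> bool list \<times> nat" where
  "csucc A \<kappa> =
     (let v = fst \<kappa>; j = snd \<kappa>; cs = children A v; k = length cs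
      in if v = [True] then (cs ! (j mod k), 0)
         else if j < k then (cs ! j, 0)
         else (tparent v, cidx v))"

definition cprec :: "bool list set \<Rightarrow> bool list \<times> nat \<Rightarrow> bool list \<times> nat \<Rightarrow> bool" where
  "cprec A \<kappa> \<kappa>' \<longleftrightarrow> \<kappa> \<in> corners A \<and> \<kappa>' \<in> corners A \<and> (\<exists>n>0. (csucc A ^^ n) \<kappa> = \<kappa>')"

definition cpreceq :: "bool list set \<Rightarrow> bool list \<times> nat \<Rightarrow> bool list \<times> nat \<Rightarrow> bool" where
  "cpreceq A \<kappa> \<kappa>' \<longleftrightarrow> (\<kappa> = \<kappa>' \<and> \<kappa> \<in> corners A) \<or> cprec A \<kappa> \<kappa>'"

definition label :: "bool list set \<Rightarrow> bool list \<times> nat \<Rightarrow> int" where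
  "label A = (THE S. (\<forall>\<kappa>. \<kappa> \<notin> corners A \<longrightarrow> S \<kappa> = 0)
      \<and> S (rho A) = (if is_bud_corner A (rho A) then -4 else 0)
      \<and> (\<forall>\<kappa>\<in>corners A. S (csucc A \<kappa>) =
            S \<kappa> + delta A \<kappa> - (if csucc A \<kappa> = rho A then 6 else 0)))"

definition attach_cond :: "bool list set \<Rightarrow> bool list \<times> nat \<Rightarrow> bool list \<times> nat \<Rightarrow> bool" where
  "attach_cond A \<kappa> \<kappa>' \<longleftrightarrow> cprec A \<kappa> \<kappa>' \<and>
     label A \<kappa>' \<le> label A \<kappa> - (if cprec A \<kappa> (rho A) \<and> cpreceq A (rho A) \<kappa>' then 6 else 0)"

definition is_first_attach :: "bool list set \<Rightarrow> bool list \<times> nat \<Rightarrow> bool list \<times> nat \<Rightarrow> bool" where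
  "is_first_attach A \<kappa> \<kappa>' \<longleftrightarrow> attach_cond A \<kappa> \<kappa>' \<and>
     (\<forall>\<mu>. cprec A \<kappa> \<mu> \<and> cprec A \<mu> \<kappa>' \<longrightarrow> \<not> attach_cond A \<kappa> \<mu>)"

text \<open>sigma kappa; None represents -infinity.\<close>
definition attach_corner :: "bool list set \<Rightarrow> bool list \<times> nat \<Rightarrow> (bool list \<times> nat) option" where
  "attach_corner A \<kappa> = (if \<exists>\<kappa>'. is_first_attach A \<kappa> \<kappa>'
                 then Some (THE \<kappa>'. is_first_attach A \<kappa> \<kappa>') else None)"

text \<open>Sample space: independent fair coins. omega (Inl i) is X_i (True = +1), i >= 1;
  omega (Inr (i, u)) decides whether node u of the i-th Galton-Watson tree B_i has
  two children (True) or none (False).\<close>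
type_synonym omega = "nat + nat \<times> bool list \<Rightarrow> bool"

definition rt_space :: "omega measure" where
  "rt_space = PiM UNIV (\<lambda>_. measure_pmf (bernoulli_pmf (1/2)))"

definition Xv :: "omega \<Rightarrow> nat \<Rightarrow> bool" where
  "Xv \<omega> i = \<omega> (Inl i)"

definition spine :: "omega \<Rightarrow> bool list set" where
  "spine \<omega> = {map (Xv \<omega>) [1..<i+1] | i. True}"

text \<open>The Galton-Watson tree B_i: u belongs to B_i iff every proper prefix of u
  (every strict ancestor of u) has two children.\<close>
definition GW :: "omega \<Rightarrow> nat \<Rightarrow> bool list set" where
  "GW \<omega> i = {u. \<forall>k<length u. \<omega> (Inr (i, take k u))}"

definition Aset :: "omega \<Rightarrow> bool list set" where
  "Aset \<omega> = spine \<omega> \<union>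
     (\<Union>i\<in>{1..}. (\<lambda>u. map (Xv \<omega>) [1..<i] @ [\<not> Xv \<omega> i] @ u) ` GW \<omega> i)"

end

theory Submission
  imports Defs
begin

text \<open>
  Almost surely every Galton-Watson tree \<open>B\<^sub>i\<close> is finite, because the probability \<open>q\<^sub>n\<close> of
  surviving to depth \<open>n\<close> satisfies \<open>q\<^sub>n\<^sub>+\<^sub>1 = q\<^sub>n - q\<^sub>n\<^sup>2/2\<close>, hence \<open>q\<^sub>n \<le> 2/(n + 2)\<close>; and the
  simple random walk with steps \<open>X\<^sub>2, X\<^sub>3, \<dots>\<close> is unbounded below, because the probability of
  staying positive from height \<open>x\<close> is harmonic, vanishes at \<open>0\<close> and is bounded, hence vanishes.

  On this event the contour walk started at any corner only has to traverse finitely many finite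
  branches, so it eventually passes through the first corner of every deep spine vertex. The
  labels are explicit: at the first corner of a non-root vertex the label is a height function,
  which along the spine is the random walk above. Hence from every corner the walk reaches a
  corner with a label lower by at least 6, and since it visits infinitely many distinct corners
  its orbit is injective, so that the first such corner \<open>\<sigma>(\<kappa>)\<close> exists.
\<close>

section \<open>Contour walks of full binary trees\<close>

definition reaches :: "bool list set \<Rightarrow> bool list \<times> nat \<Rightarrow> bool list \<times> nat \<Rightarrow> bool" where
  "reaches A \<kappa> \<kappa>' \<longleftrightarrow> (\<exists>n. (csucc A ^^ n) \<kappa> = \<kappa>')"

lemma reaches_refl [simp]: "reaches A \<kappa> \<kappa>"
  unfolding reaches_def by (metis funpow_0)

lemma reaches_trans: "reaches A \<kappa> \<mu> \<Longrightarrow> reaches A \<mu> \<nu> \<Longrightarrow> reaches A \<kappa> \<nu>"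
  unfolding reaches_def by (metis funpow_add comp_apply)

lemma reaches_csuccI: "csucc A \<kappa> = \<mu> \<Longrightarrow> reaches A \<kappa> \<mu>"
  unfolding reaches_def by (rule exI[of _ 1]) simp

lemma reaches_csucc: "csucc A \<kappa> = \<mu> \<Longrightarrow> reaches A \<mu> \<nu> \<Longrightarrow> reaches A \<kappa> \<nu>"
  unfolding reaches_def by (metis funpow_Suc_right comp_apply)

lemma children_root: "children A [True] =
    [False] # (if [True, False] \<in> A then [[True, False], [True, True]] else [])"
  by (simp add: children_def)

lemma nch_root: "nch A [True] = (if [True, False] \<in> A then 3 else 1)"
  by (simp add: nch_def children_def)

lemma nch_nonroot: "v \<noteq> [True] \<Longrightarrow> nch A v = (if v @ [False] \<in> A then 2 else 0)"
  by (simp add: nch_def children_def)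

lemma csucc_root: "csucc A ([True], j) = (children A [True] ! (j mod nch A [True]), 0)"
  by (simp add: csucc_def Let_def nch_def)

lemma csucc_root_cases:
  "csucc A ([True], j) \<in> {([False], 0), ([True, False], 0), ([True, True], 0)}"
proof -
  have "children A [True] \<noteq> []" by (simp add: children_root)
  then have "children A [True] ! (j mod nch A [True]) \<in> set (children A [True])"
    unfolding nch_def by (intro nth_mem) simp
  then show ?thesis by (auto simp: csucc_root children_root split: if_splits)
qed

lemma csucc_down:
  "v \<noteq> [True] \<Longrightarrow> v @ [False] \<in> A \<Longrightarrow> j < 2 \<Longrightarrow> csucc A (v, j) = (v @ [j = 1], 0)"
  by (auto simp: csucc_def Let_def children_def less_2_cases_iff)

lemma csucc_up: "v \<noteq> [True] \<Longrightarrow> j = nch A v \<Longrightarrow> csucc A (v, j) = (tparent v, cidx v)"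
  by (simp add: csucc_def Let_def nch_def)

lemma tparent_snoc: "v \<noteq> [] \<Longrightarrow> tparent (v @ [b]) = v"
  by (auto simp: tparent_def)

lemma cidx_snoc: "v \<noteq> [] \<Longrightarrow> v \<noteq> [True] \<Longrightarrow> cidx (v @ [b]) = (if b then 2 else 1)"
  by (auto simp: cidx_def)

lemma nonempty_list_cases [consumes 1, case_names root first_root_child later_root_child deep]:
  assumes "v \<noteq> []"
  obtains "v = [True]" | "v = [False]" | b where "v = [True, b]"
    | w b where "v = w @ [b]" "w \<noteq> []" "w \<noteq> [True]"
proof -
  obtain w b where v: "v = w @ [b]" using assms by (metis rev_exhaust)
  consider "w = []" | "w = [True]" | "w \<noteq> []" "w \<noteq> [True]" by blast
  then show thesis using v that by cases (cases b; auto)+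
qed

lemma funpow_eq_imp_eq_of_infinite_orbit:
  fixes f :: "'a \<Rightarrow> 'a"
  assumes inf: "infinite (range (\<lambda>n. (f ^^ n) x))" and eq: "(f ^^ m) x = (f ^^ n) x"
  shows "m = n"
proof (rule ccontr)
  assume "m \<noteq> n"
  with eq obtain a b where ab: "a < b" "(f ^^ a) x = (f ^^ b) x"
    by (metis linorder_neqE_nat)
  have "(f ^^ k) x \<in> (\<lambda>n. (f ^^ n) x) ` {..<b}" for k
  proof (induction k rule: less_induct)
    case (less k)
    show ?case
    proof (cases "k < b")
      case False
      then have "(f ^^ k) x = (f ^^ (k - b)) ((f ^^ b) x)"
        by (metis funpow_add comp_apply le_add_diff_inverse2 not_less)
      also have "\<dots> = (f ^^ (k - b + a)) x"
        by (simp add: ab(2)[symmetric] funpow_add)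
      finally show ?thesis using less.IH[of "k - b + a"] ab(1) False by simp
    qed simp
  qed
  then have "range (\<lambda>n. (f ^^ n) x) \<subseteq> (\<lambda>n. (f ^^ n) x) ` {..<b}" by blast
  with inf show False using finite_surj by blast
qed

locale full_binary_tree =
  fixes A :: "bool list set"
  assumes singleton_mem: "[b] \<in> A"
    and prefix_mem: "v @ [b] \<in> A \<Longrightarrow> v \<in> A"
    and sibling_mem: "v @ [b] \<in> A \<Longrightarrow> v @ [\<not> b] \<in> A"
begin

lemma child_mem_iff: "v @ [b] \<in> A \<longleftrightarrow> v @ [False] \<in> A"
  using sibling_mem[of v True] sibling_mem[of v False] by (cases b) auto

lemma child_corner:
  assumes "c \<in> set (children A v)" "v \<noteq> []"
  shows "(c, 0) \<in> corners A"
proof -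
  have "c \<in> A \<and> c \<noteq> [] \<and> c \<noteq> [True]"
    using assms child_mem_iff[of "[True]"] child_mem_iff[of v] singleton_mem
    by (cases "v = [True]") (auto simp: children_def split: if_splits)
  then show ?thesis by (simp add: corners_def)
qed

lemma parent_corner:
  assumes "v \<in> A" "v \<noteq> []" "v \<noteq> [True]"
  shows "(tparent v, cidx v) \<in> corners A"
  using assms(2)
proof (cases rule: nonempty_list_cases)
  case first_root_child
  then show ?thesis using singleton_mem by (simp add: corners_def tparent_def cidx_def nch_root)
next
  case (later_root_child b)
  then have "[True, False] \<in> A" using assms(1) child_mem_iff[of "[True]" b] by simp
  with later_root_child show ?thesis
    using singleton_mem by (auto simp: corners_def tparent_def cidx_def nch_root)
next
  case (deep w b)
  then have "w \<in> A" "w @ [False] \<in> A" using assms(1) prefix_mem child_mem_iff by blast+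
  with deep show ?thesis by (auto simp: corners_def tparent_snoc cidx_snoc nch_nonroot)
qed (use assms in simp)

lemma csucc_in_corners:
  assumes "\<kappa> \<in> corners A"
  shows "csucc A \<kappa> \<in> corners A"
proof -
  obtain v j where \<kappa>: "\<kappa> = (v, j)" "v \<in> A" "v \<noteq> []" "j \<le> nch A v"
    using assms by (cases \<kappa>) (auto simp: corners_def)
  let ?cs = "children A v"
  show ?thesis
  proof (cases "v = [True] \<or> j < length ?cs")
    case True
    let ?c = "?cs ! (if v = [True] then j mod length ?cs else j)"
    have "?cs \<noteq> []" using True by (auto simp: children_root)
    then have "?c \<in> set ?cs" using True by auto
    moreover have "csucc A \<kappa> = (?c, 0)" using True \<kappa>(1) by (auto simp: csucc_def Let_def)
    ultimately show ?thesis using child_corner[OF _ \<kappa>(3)] by simp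
  next
    case False
    with \<kappa> show ?thesis using parent_corner by (simp add: csucc_def Let_def)
  qed
qed

lemma funpow_csucc_in_corners: "\<kappa> \<in> corners A \<Longrightarrow> (csucc A ^^ n) \<kappa> \<in> corners A"
  by (induction n) (simp_all add: csucc_in_corners)

lemma rho_in_corners: "rho A \<in> corners A"
  using singleton_mem by (simp add: rho_def corners_def nch_root)

lemma exits_via_children:
  assumes v: "v \<noteq> [True]" "v @ [False] \<in> A" and j: "j \<le> nch A v"
    and children: "\<And>b. reaches A (v @ [b], 0) (v, if b then 2 else 1)"
  shows "reaches A (v, j) (tparent v, cidx v)"
proof -
  have nch: "nch A v = 2" using v by (simp add: nch_nonroot)
  have r2: "reaches A (v, 2) (tparent v, cidx v)"
    using csucc_up[OF v(1) nch[symmetric]] by (rule reaches_csuccI)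
  have "csucc A (v, 1) = (v @ [True], 0)" using csucc_down[OF v] by simp
  then have r1: "reaches A (v, 1) (tparent v, cidx v)"
    by (rule reaches_csucc) (rule reaches_trans[OF _ r2], use children[of True] in simp)
  have "csucc A (v, 0) = (v @ [False], 0)" using csucc_down[OF v] by simp
  then have r0: "reaches A (v, 0) (tparent v, cidx v)"
    by (rule reaches_csucc) (rule reaches_trans[OF _ r1], use children[of False] in simp)
  have "j \<le> 2" using j nch by simp
  then show ?thesis using r0 r1 r2 by (auto simp: le_Suc_eq numeral_2_eq_2)
qed

lemma exits_finite_subtree:
  assumes "v \<in> A" "v \<noteq> []" "v \<noteq> [True]" "finite {u. v @ u \<in> A}" "j \<le> nch A v"
  shows "reaches A (v, j) (tparent v, cidx v)"
proof -
  obtain N where "\<forall>u\<in>{u. v @ u \<in> A}. length u < N"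
    using finite_maxlen[OF assms(4)] by blast
  then show ?thesis using assms(1-3,5)
  proof (induction N arbitrary: v j)
    case 0
    then show ?case by (metis append_Nil2 mem_Collect_eq not_less0)
  next
    case (Suc N v j)
    show ?case
    proof (cases "v @ [False] \<in> A")
      case False
      then have "j = nch A v" using Suc.prems(4,5) by (simp add: nch_nonroot)
      then show ?thesis using csucc_up[OF Suc.prems(4)] by (intro reaches_csuccI) simp
    next
      case True
      have "reaches A (v @ [b], 0) (v, if b then 2 else 1)" for b
      proof -
        have "v @ [b] \<in> A" using True child_mem_iff by blast
        moreover have "\<forall>u\<in>{u. (v @ [b]) @ u \<in> A}. length u < N"
        proof
          fix u assume "u \<in> {u. (v @ [b]) @ u \<in> A}"
          then have "v @ (b # u) \<in> A" by simp
          then show "length u < N" using Suc.prems(1) by fastforce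
        qed
        moreover have "v @ [b] \<noteq> []" "v @ [b] \<noteq> [True]" using Suc.prems(3) by auto
        ultimately have "reaches A (v @ [b], 0) (tparent (v @ [b]), cidx (v @ [b]))"
          using Suc.IH by blast
        then show ?thesis using Suc.prems(3,4) by (simp add: tparent_snoc cidx_snoc)
      qed
      then show ?thesis using exits_via_children Suc.prems(4,5) True by blast
    qed
  qed
qed

end

section \<open>An explicit labelling\<close>

definition entry_label :: "bool list \<Rightarrow> int" where
  "entry_label v = (if hd v then 2 else -1) + (\<Sum>b\<leftarrow>tl v. if b then 1 else -1)"

text \<open>Passing an internal corner costs 1 and traversing a finite full binary subtree gains 3 (it
  has one more bud than internal vertices), so consecutive corners of a vertex differ by 2.\<close>
definition corner_label :: "bool list set \<Rightarrow> bool list \<times> nat \<Rightarrow> int" where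
  "corner_label A \<kappa> =
     (if \<kappa> \<notin> corners A then 0
      else if fst \<kappa> = [True] then 2 * int (snd \<kappa>) - (if \<kappa> = rho A then 6 else 0)
      else entry_label (fst \<kappa>) + 2 * int (snd \<kappa>))"

definition is_labelling :: "bool list set \<Rightarrow> (bool list \<times> nat \<Rightarrow> int) \<Rightarrow> bool" where
  "is_labelling A S \<longleftrightarrow> (\<forall>\<kappa>. \<kappa> \<notin> corners A \<longrightarrow> S \<kappa> = 0)
      \<and> S (rho A) = (if is_bud_corner A (rho A) then -4 else 0)
      \<and> (\<forall>\<kappa>\<in>corners A. S (csucc A \<kappa>) = S \<kappa> + delta A \<kappa> - (if csucc A \<kappa> = rho A then 6 else 0))"

lemma entry_label_snoc: "v \<noteq> [] \<Longrightarrow> entry_label (v @ [b]) = entry_label v + (if b then 1 else -1)"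
  by (cases v) (auto simp: entry_label_def)

lemma entry_label_simps: "entry_label [False] = -1" "entry_label [True, False] = 1"
    "entry_label [True, True] = 3"
  by (simp_all add: entry_label_def)

lemma corner_label_nonroot:
  "(v, j) \<in> corners A \<Longrightarrow> v \<noteq> [True] \<Longrightarrow> corner_label A (v, j) = entry_label v + 2 * int j"
  by (simp add: corner_label_def)

lemma corner_label_root: "([True], j) \<in> corners A \<Longrightarrow>
    corner_label A ([True], j) = 2 * int j - (if j = nch A [True] then 6 else 0)"
  by (simp add: corner_label_def rho_def)

lemma delta_eq: "(v, j) \<in> corners A \<Longrightarrow>
    delta A (v, j) = (if nch A v = (if v = [True] then 1 else 0) then 3 else -1)"
  by (simp add: delta_def is_bud_corner_def tdegree_def)

context full_binary_tree
begin

lemma corner_label_csucc_root: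
  assumes \<kappa>: "([True], j) \<in> corners A"
  shows "corner_label A (csucc A ([True], j)) = corner_label A ([True], j) + delta A ([True], j)"
proof -
  obtain c where c: "csucc A ([True], j) = (c, 0)" "c \<in> {[False], [True, False], [True, True]}"
    using csucc_root_cases[of A j] by blast
  have "(c, 0) \<in> corners A" using csucc_in_corners[OF \<kappa>] c(1) by simp
  then have lc: "corner_label A (csucc A ([True], j)) = entry_label c"
    using c by (auto simp: corner_label_nonroot)
  show ?thesis
  proof (cases "[True, False] \<in> A")
    case True
    then have "j \<in> {1, 2, 3}" using \<kappa> by (auto simp: corners_def nch_root)
    moreover have "c = [[False], [True, False], [True, True]] ! (j mod 3)"
      using c True by (simp add: csucc_root children_root nch_root)
    ultimately show ?thesis using True \<kappa> lc
      by (auto simp: delta_eq corner_label_root nch_root entry_label_simps)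
  next
    case False
    then have "j = 1" "c = [False]" using \<kappa> c by (auto simp: corners_def nch_root csucc_root children_root)
    then show ?thesis using False \<kappa> lc
      by (simp add: delta_eq corner_label_root nch_root entry_label_simps)
  qed
qed

lemma corner_label_csucc_down:
  assumes \<kappa>: "(v, j) \<in> corners A" "v \<noteq> [True]" and j: "j < nch A v"
  shows "corner_label A (csucc A (v, j)) = corner_label A (v, j) + delta A (v, j)"
proof -
  have v: "v @ [False] \<in> A" "nch A v = 2" "v \<noteq> []"
    using \<kappa> j by (auto simp: nch_nonroot corners_def split: if_splits)
  then have "csucc A (v, j) = (v @ [j = 1], 0)" using csucc_down \<kappa>(2) j by simp
  moreover have "v @ [j = 1] \<noteq> [True]" using v(3) by (cases v) auto
  moreover have "csucc A (v, j) \<in> corners A" using \<kappa> csucc_in_corners by blast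
  ultimately show ?thesis using \<kappa> v j
    by (auto simp: corner_label_nonroot entry_label_snoc delta_eq)
qed

lemma corner_label_csucc_up:
  assumes \<kappa>: "(v, j) \<in> corners A" "v \<noteq> [True]" and j: "j = nch A v"
  shows "corner_label A (csucc A (v, j)) =
    corner_label A (v, j) + delta A (v, j) - (if csucc A (v, j) = rho A then 6 else 0)"
proof -
  have v: "v \<in> A" "v \<noteq> []" using \<kappa> by (auto simp: corners_def)
  have up: "csucc A (v, j) = (tparent v, cidx v)" using csucc_up \<kappa>(2) j by simp
  have "nch A v = 0 \<or> nch A v = 2" using \<kappa>(2) by (simp add: nch_nonroot)
  then have lhs: "corner_label A (v, j) + delta A (v, j) = entry_label v + 3"
    using \<kappa> j by (auto simp: corner_label_nonroot delta_eq)
  have pc: "(tparent v, cidx v) \<in> corners A" using parent_corner v \<kappa>(2) by blast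
  from v(2) show ?thesis
  proof (cases rule: nonempty_list_cases)
    case first_root_child
    then show ?thesis using up lhs pc
      by (simp add: tparent_def cidx_def corner_label_root rho_def entry_label_simps)
  next
    case (later_root_child b)
    then have "nch A [True] = 3" using v(1) child_mem_iff[of "[True]" b] by (simp add: nch_root)
    then show ?thesis using later_root_child up lhs pc
      by (cases b) (simp_all add: tparent_def cidx_def corner_label_root rho_def entry_label_simps)
  next
    case (deep w b)
    then show ?thesis using up lhs pc
      by (cases b) (simp_all add: tparent_snoc cidx_snoc corner_label_nonroot rho_def entry_label_snoc)
  qed (use \<kappa> in simp)
qed

lemma corner_label_is_labelling: "is_labelling A (corner_label A)"
  unfolding is_labelling_def
proof (intro conjI ballI allI impI)
  fix \<kappa> assume \<kappa>: "\<kappa> \<in> corners A"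
  obtain v j where vj: "\<kappa> = (v, j)" by (cases \<kappa>)
  have "j \<le> nch A v" using \<kappa> vj by (simp add: corners_def)
  show "corner_label A (csucc A \<kappa>) =
      corner_label A \<kappa> + delta A \<kappa> - (if csucc A \<kappa> = rho A then 6 else 0)"
  proof (cases "v = [True] \<or> j < nch A v")
    case True
    have "csucc A (v, j) \<noteq> rho A"
    proof (cases "v = [True]")
      case False
      then have "v @ [False] \<in> A" "nch A v = 2" "v \<noteq> []"
        using True \<kappa> vj by (auto simp: nch_nonroot corners_def split: if_splits)
      with False True show ?thesis by (cases v) (auto simp: csucc_down rho_def)
    qed (use csucc_root_cases[of A j] in \<open>auto simp: rho_def\<close>)
    moreover have "corner_label A (csucc A \<kappa>) = corner_label A \<kappa> + delta A \<kappa>"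
      using True \<kappa> vj corner_label_csucc_root corner_label_csucc_down by blast
    ultimately show ?thesis using vj by simp
  next
    case False
    then show ?thesis using \<kappa> vj \<open>j \<le> nch A v\<close> corner_label_csucc_up by force
  qed
qed (auto simp: corner_label_def rho_def is_bud_corner_def tdegree_def nch_root corners_def)

lemma labelling_diff_invariant:
  assumes S: "is_labelling A S" "is_labelling A S'" and \<kappa>: "\<kappa> \<in> corners A"
    and "reaches A \<kappa> \<mu>"
  shows "S \<mu> - S' \<mu> = S \<kappa> - S' \<kappa>"
proof -
  have "S ((csucc A ^^ n) \<kappa>) - S' ((csucc A ^^ n) \<kappa>) = S \<kappa> - S' \<kappa>" for n
    using funpow_csucc_in_corners[OF \<kappa>] S by (induction n) (auto simp: is_labelling_def)
  then show ?thesis using assms(4) by (auto simp: reaches_def)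
qed

lemma label_eqI:
  assumes S: "is_labelling A S"
    and meet: "\<And>\<kappa>. \<kappa> \<in> corners A \<Longrightarrow> \<exists>\<mu>. reaches A \<kappa> \<mu> \<and> reaches A (rho A) \<mu>"
  shows "label A = S"
proof -
  have unique: "S' = S" if S': "is_labelling A S'" for S'
  proof
    fix \<kappa>
    show "S' \<kappa> = S \<kappa>"
    proof (cases "\<kappa> \<in> corners A")
      case True
      then obtain \<mu> where \<mu>: "reaches A \<kappa> \<mu>" "reaches A (rho A) \<mu>" using meet by blast
      have "S' (rho A) = S (rho A)" using S S' by (simp add: is_labelling_def)
      then show ?thesis
        using labelling_diff_invariant[OF S' S True \<mu>(1)]
          labelling_diff_invariant[OF S' S rho_in_corners \<mu>(2)] by simp
    next
      case False
      then have "S' \<kappa> = 0" "S \<kappa> = 0" using S S' unfolding is_labelling_def by blast+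
      then show ?thesis by simp
    qed
  qed
  have "(THE S. is_labelling A S) = S" by (rule the_equality[where P = "is_labelling A", OF S unique])
  then show ?thesis by (simp add: label_def is_labelling_def)
qed

end

section \<open>Existence of attachment corners\<close>

lemma attach_corner_exists:
  assumes orbit_inj: "\<And>m n. (csucc A ^^ m) \<kappa> = (csucc A ^^ n) \<kappa> \<Longrightarrow> m = n"
    and hit: "\<exists>n>0. attach_cond A \<kappa> ((csucc A ^^ n) \<kappa>)"
  shows "attach_corner A \<kappa> \<noteq> None"
proof -
  define N where "N = (LEAST n. 0 < n \<and> attach_cond A \<kappa> ((csucc A ^^ n) \<kappa>))"
  have N: "0 < N" "attach_cond A \<kappa> ((csucc A ^^ N) \<kappa>)"
    using LeastI_ex[OF hit] unfolding N_def by auto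
  have "is_first_attach A \<kappa> ((csucc A ^^ N) \<kappa>)"
    unfolding is_first_attach_def
  proof (intro conjI allI impI)
    fix \<mu> assume "cprec A \<kappa> \<mu> \<and> cprec A \<mu> ((csucc A ^^ N) \<kappa>)"
    then obtain a b where a: "0 < a" "(csucc A ^^ a) \<kappa> = \<mu>"
      and b: "0 < b" "(csucc A ^^ b) \<mu> = (csucc A ^^ N) \<kappa>"
      unfolding cprec_def by blast
    then have "(csucc A ^^ (b + a)) \<kappa> = (csucc A ^^ N) \<kappa>" by (simp add: funpow_add)
    then have "a < N" using orbit_inj b(1) by fastforce
    then show "\<not> attach_cond A \<kappa> \<mu>" using not_less_Least a unfolding N_def by blast
  qed (rule N(2))
  then have "\<exists>\<kappa>'. is_first_attach A \<kappa> \<kappa>'" by blast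
  then show ?thesis unfolding attach_corner_def by simp
qed

context full_binary_tree
begin

lemma contour_conclusions:
  assumes orbit_inj: "\<And>\<kappa> m n. \<kappa> \<in> corners A \<Longrightarrow> (csucc A ^^ m) \<kappa> = (csucc A ^^ n) \<kappa> \<Longrightarrow> m = n"
    and drop: "\<And>\<kappa>. \<kappa> \<in> corners A \<Longrightarrow> \<exists>n>0. label A ((csucc A ^^ n) \<kappa>) \<le> label A \<kappa> - 6"
  shows "(\<forall>\<kappa>\<in>corners A. \<exists>\<kappa>'\<in>corners A. cprec A \<kappa> \<kappa>' \<and>
            label A \<kappa>' \<le> label A \<kappa> - (if cprec A \<kappa> (rho A) \<and> cpreceq A (rho A) \<kappa>' then 6 else 0))
       \<and> (\<forall>\<kappa>\<in>corners A. is_bud_corner A \<kappa> \<longrightarrow> attach_corner A \<kappa> \<noteq> None)"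
proof -
  have hit: "\<exists>n>0. attach_cond A \<kappa> ((csucc A ^^ n) \<kappa>)" if \<kappa>: "\<kappa> \<in> corners A" for \<kappa>
  proof -
    obtain n where n: "0 < n" "label A ((csucc A ^^ n) \<kappa>) \<le> label A \<kappa> - 6"
      using drop[OF \<kappa>] by blast
    then have "cprec A \<kappa> ((csucc A ^^ n) \<kappa>)"
      using \<kappa> funpow_csucc_in_corners unfolding cprec_def by blast
    moreover have "label A ((csucc A ^^ n) \<kappa>) \<le> label A \<kappa> - (if P then 6 else 0)" for P
      using n(2) by simp
    ultimately show ?thesis using n(1) unfolding attach_cond_def by blast
  qed
  show ?thesis
  proof (intro conjI ballI impI)
    fix \<kappa> assume \<kappa>: "\<kappa> \<in> corners A"
    then obtain n where "attach_cond A \<kappa> ((csucc A ^^ n) \<kappa>)" using hit by blast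
    moreover have "(csucc A ^^ n) \<kappa> \<in> corners A" using \<kappa> by (rule funpow_csucc_in_corners)
    ultimately have "\<exists>\<kappa>'\<in>corners A. attach_cond A \<kappa> \<kappa>'" by blast
    then show "\<exists>\<kappa>'\<in>corners A. cprec A \<kappa> \<kappa>' \<and>
        label A \<kappa>' \<le> label A \<kappa> - (if cprec A \<kappa> (rho A) \<and> cpreceq A (rho A) \<kappa>' then 6 else 0)"
      by (simp only: attach_cond_def)
    show "attach_corner A \<kappa> \<noteq> None" using orbit_inj[OF \<kappa>] hit[OF \<kappa>] by (rule attach_corner_exists)
  qed
qed

end

section \<open>Spine and branches of the random tree\<close>

definition spine_vertex :: "omega \<Rightarrow> nat \<Rightarrow> bool list" where
  "spine_vertex \<omega> d = map (Xv \<omega>) [1..<Suc d]"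

text \<open>The copy of \<open>B\<^sub>d\<^sub>+\<^sub>1\<close> is rooted at \<open>branch_root \<omega> d\<close>.\<close>
definition branch_root :: "omega \<Rightarrow> nat \<Rightarrow> bool list" where
  "branch_root \<omega> d = spine_vertex \<omega> d @ [\<not> Xv \<omega> (Suc d)]"

lemma spine_vertex_0 [simp]: "spine_vertex \<omega> 0 = []"
  by (simp add: spine_vertex_def)

lemma spine_vertex_Suc: "spine_vertex \<omega> (Suc d) = spine_vertex \<omega> d @ [Xv \<omega> (Suc d)]"
  by (simp add: spine_vertex_def)

lemma length_spine_vertex [simp]: "length (spine_vertex \<omega> d) = d"
  by (simp add: spine_vertex_def)

lemma nth_spine_vertex: "k < d \<Longrightarrow> spine_vertex \<omega> d ! k = Xv \<omega> (Suc k)"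
  by (simp add: spine_vertex_def del: upt_Suc)

lemma nth_branch_root_append:
  "k \<le> d \<Longrightarrow> (branch_root \<omega> d @ u) ! k = (if k = d then \<not> Xv \<omega> (Suc k) else Xv \<omega> (Suc k))"
  by (auto simp: branch_root_def nth_append nth_spine_vertex)

lemma branch_neq_spine: "branch_root \<omega> d @ u \<noteq> spine_vertex \<omega> n"
proof
  assume eq: "branch_root \<omega> d @ u = spine_vertex \<omega> n"
  have "length (branch_root \<omega> d @ u) = n" unfolding eq by simp
  then have "d < n" by (simp add: branch_root_def)
  then show False using arg_cong[OF eq, of "\<lambda>v. v ! d"] by (simp add: nth_branch_root_append nth_spine_vertex)
qed

lemma branch_eq_branch_iff:
  "branch_root \<omega> d @ u = branch_root \<omega> d' @ u' \<longleftrightarrow> d = d' \<and> u = u'"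
proof
  assume eq: "branch_root \<omega> d @ u = branch_root \<omega> d' @ u'"
  have "\<not> d < d'" if "branch_root \<omega> d @ u = branch_root \<omega> d' @ u'" for d d' u u'
    using arg_cong[OF that, of "\<lambda>v. v ! d"] by (auto simp: nth_branch_root_append)
  then have "d = d'" using eq by (metis linorder_neqE_nat)
  with eq show "d = d' \<and> u = u'" by simp
qed simp

lemma Aset_eq:
  "Aset \<omega> = range (spine_vertex \<omega>) \<union> (\<Union>d. (@) (branch_root \<omega> d) ` GW \<omega> (Suc d))"
proof -
  have "spine \<omega> = range (spine_vertex \<omega>)" by (auto simp: spine_def spine_vertex_def)
  moreover have "{1..} = range Suc" by (simp add: atLeast_Suc_greaterThan greaterThan_0)
  ultimately show ?thesis
    by (simp add: Aset_def branch_root_def spine_vertex_def image_image del: upt_Suc)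
qed

lemma spine_vertex_mem [simp]: "spine_vertex \<omega> d \<in> Aset \<omega>"
  by (simp add: Aset_eq)

lemma mem_branch_iff: "branch_root \<omega> d @ u \<in> Aset \<omega> \<longleftrightarrow> u \<in> GW \<omega> (Suc d)"
  by (auto simp: Aset_eq branch_neq_spine branch_eq_branch_iff)

lemma Aset_cases [consumes 1, case_names spine branch]:
  assumes "v \<in> Aset \<omega>"
  obtains d where "v = spine_vertex \<omega> d"
    | d u where "u \<in> GW \<omega> (Suc d)" "v = branch_root \<omega> d @ u"
  using assms unfolding Aset_eq by blast

lemma GW_Nil [simp]: "[] \<in> GW \<omega> i"
  by (simp add: GW_def)

lemma GW_snoc: "u @ [b] \<in> GW \<omega> i \<longleftrightarrow> u \<in> GW \<omega> i \<and> \<omega> (Inr (i, u))"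
  by (auto simp: GW_def less_Suc_eq nth_append)

lemma spine_child_mem: "spine_vertex \<omega> d @ [b] \<in> Aset \<omega>"
proof (cases "b = Xv \<omega> (Suc d)")
  case False
  then have "spine_vertex \<omega> d @ [b] = branch_root \<omega> d @ []" by (simp add: branch_root_def)
  then show ?thesis using mem_branch_iff[of \<omega> d "[]"] by simp
qed (use spine_vertex_mem[of \<omega> "Suc d"] in \<open>simp add: spine_vertex_Suc\<close>)

lemma full_binary_tree_Aset: "full_binary_tree (Aset \<omega>)"
proof
  show "[b] \<in> Aset \<omega>" for b using spine_child_mem[of \<omega> 0] by simp
next
  fix v b assume "v @ [b] \<in> Aset \<omega>"
  then have "v \<in> Aset \<omega> \<and> v @ [\<not> b] \<in> Aset \<omega>"
  proof (cases rule: Aset_cases)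
    case (spine d)
    then obtain d' where "v = spine_vertex \<omega> d'" by (cases d) (auto simp: spine_vertex_Suc)
    then show ?thesis using spine_child_mem by simp
  next
    case (branch d u)
    show ?thesis
    proof (cases u rule: rev_cases)
      case Nil
      then have "v = spine_vertex \<omega> d" using branch(2) by (simp add: branch_root_def)
      then show ?thesis using spine_child_mem by simp
    next
      case (snoc u' c)
      then have "v = branch_root \<omega> d @ u'" "u' \<in> GW \<omega> (Suc d)" "u' @ [\<not> b] \<in> GW \<omega> (Suc d)"
        using branch by (auto simp: GW_snoc)
      then show ?thesis using mem_branch_iff[of \<omega> d] by (metis append.assoc)
    qed
  qed
  then show "v \<in> Aset \<omega>" "v @ [\<not> b] \<in> Aset \<omega>" by blast+
qed

interpretation Aset: full_binary_tree "Aset \<omega>" for \<omega>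
  by (rule full_binary_tree_Aset)

lemma finite_branch_subtree:
  assumes "finite (GW \<omega> (Suc d))"
  shows "finite {x. branch_root \<omega> d @ u @ x \<in> Aset \<omega>}"
proof -
  have "{x. branch_root \<omega> d @ u @ x \<in> Aset \<omega>} \<subseteq> drop (length u) ` GW \<omega> (Suc d)"
    by (auto simp: mem_branch_iff[of \<omega> d "u @ _", simplified] image_iff intro!: bexI[of _ "u @ _"])
  then show ?thesis using assms finite_surj by blast
qed

section \<open>The contour walk reaches every deep spine corner\<close>

text \<open>The first spine vertex other than the root \<open>[True]\<close> of \<open>T(A)\<close>.\<close>
definition spine_start :: "omega \<Rightarrow> nat" where
  "spine_start \<omega> = (if Xv \<omega> 1 then 2 else 1)"

lemma spine_vertex_2: "spine_vertex \<omega> 2 = [Xv \<omega> 1, Xv \<omega> 2]"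
  by (simp add: spine_vertex_def upt_rec numeral_2_eq_2)

lemma spine_vertex_nonroot:
  assumes "spine_start \<omega> \<le> d"
  shows "spine_vertex \<omega> d \<noteq> []" "spine_vertex \<omega> d \<noteq> [True]"
proof -
  have "d \<noteq> 0" using assms by (simp add: spine_start_def split: if_splits)
  then show "spine_vertex \<omega> d \<noteq> []" using length_spine_vertex[of \<omega> d] by force
  show "spine_vertex \<omega> d \<noteq> [True]"
  proof
    assume root: "spine_vertex \<omega> d = [True]"
    then have "d = 1" using length_spine_vertex[of \<omega> d] by simp
    with root assms show False by (simp add: spine_vertex_Suc spine_start_def One_nat_def)
  qed
qed

lemma spine_start_le:
  assumes "spine_vertex \<omega> d \<noteq> []" "spine_vertex \<omega> d \<noteq> [True]"
  shows "spine_start \<omega> \<le> d"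
proof -
  have "d \<noteq> 0" using assms(1) by (metis spine_vertex_0)
  moreover have "\<not> Xv \<omega> 1" if "d = 1" using assms(2) that by (simp add: spine_vertex_Suc One_nat_def)
  ultimately show ?thesis by (cases "d = 1") (auto simp: spine_start_def)
qed

lemma nch_spine_vertex: "spine_start \<omega> \<le> d \<Longrightarrow> nch (Aset \<omega>) (spine_vertex \<omega> d) = 2"
  using spine_vertex_nonroot spine_child_mem by (simp add: nch_nonroot)

lemma csucc_spine_vertex:
  assumes "spine_start \<omega> \<le> d" "j < 2"
  shows "csucc (Aset \<omega>) (spine_vertex \<omega> d, j) =
    (if (j = 1) = Xv \<omega> (Suc d) then spine_vertex \<omega> (Suc d) else branch_root \<omega> d, 0)"
  using csucc_down[OF spine_vertex_nonroot(2)[OF assms(1)] spine_child_mem assms(2)]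
  by (auto simp: spine_vertex_Suc branch_root_def)

definition spine_walk :: "omega \<Rightarrow> nat \<Rightarrow> int" where
  "spine_walk \<omega> n = (\<Sum>i<n. if Xv \<omega> (i + 2) then 1 else -1)"

lemma spine_walk_ge: "- int n \<le> spine_walk \<omega> n"
  by (induction n) (auto simp: spine_walk_def)

lemma entry_label_spine_vertex:
  "entry_label (spine_vertex \<omega> (Suc n)) = (if Xv \<omega> 1 then 2 else -1) + spine_walk \<omega> n"
proof (induction n)
  case (Suc n)
  have "spine_vertex \<omega> (Suc n) \<noteq> []" using length_spine_vertex[of \<omega> "Suc n"] by force
  with Suc show ?case
    by (simp add: spine_vertex_Suc[of \<omega> "Suc n"] entry_label_snoc spine_walk_def)
qed (simp add: spine_vertex_Suc entry_label_def spine_walk_def)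

context
  fixes \<omega> :: omega
  assumes finite_GW: "\<And>i. finite (GW \<omega> i)"
begin

lemma branch_exits:
  assumes v: "v = branch_root \<omega> d @ u" "v \<noteq> [True]" and \<kappa>: "(v, j) \<in> corners (Aset \<omega>)"
  shows "reaches (Aset \<omega>) (v, j) (tparent v, cidx v)"
proof (rule Aset.exits_finite_subtree)
  show "v \<in> Aset \<omega>" "v \<noteq> []" "j \<le> nch (Aset \<omega>) v" using \<kappa> by (auto simp: corners_def)
  show "finite {x. v @ x \<in> Aset \<omega>}" using finite_branch_subtree[OF finite_GW] v(1) by simp
qed (rule v(2))

lemma branch_sibling_returns:
  assumes "spine_start \<omega> \<le> d"
  shows "reaches (Aset \<omega>) (branch_root \<omega> d, 0) (spine_vertex \<omega> d, if Xv \<omega> (Suc d) then 1 else 2)"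
proof -
  have ne: "spine_vertex \<omega> d \<noteq> []" "spine_vertex \<omega> d \<noteq> [True]"
    using spine_vertex_nonroot[OF assms] by simp_all
  then have "branch_root \<omega> d \<noteq> [True]" by (cases "spine_vertex \<omega> d") (auto simp: branch_root_def)
  moreover have "(branch_root \<omega> d, 0) \<in> corners (Aset \<omega>)"
    using ne spine_child_mem by (auto simp: corners_def branch_root_def)
  ultimately have "reaches (Aset \<omega>) (branch_root \<omega> d, 0) (tparent (branch_root \<omega> d), cidx (branch_root \<omega> d))"
    using branch_exits[of _ d "[]"] by simp
  moreover have "tparent (branch_root \<omega> d) = spine_vertex \<omega> d"
    "cidx (branch_root \<omega> d) = (if Xv \<omega> (Suc d) then 1 else 2)"
    using ne by (simp_all add: branch_root_def tparent_snoc cidx_snoc)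
  ultimately show ?thesis by simp
qed

lemma spine_corner_descends:
  assumes d: "spine_start \<omega> \<le> d" and j: "j \<le> (if Xv \<omega> (Suc d) then 1 else 0)"
  shows "reaches (Aset \<omega>) (spine_vertex \<omega> d, j) (spine_vertex \<omega> (Suc d), 0)"
proof (cases "Xv \<omega> (Suc d) \<and> j = 0")
  case True
  then have "reaches (Aset \<omega>) (branch_root \<omega> d, 0) (spine_vertex \<omega> d, 1)"
    using branch_sibling_returns[OF d] by simp
  moreover have "csucc (Aset \<omega>) (spine_vertex \<omega> d, 1) = (spine_vertex \<omega> (Suc d), 0)"
    using csucc_spine_vertex[OF d, of 1] True by simp
  moreover have "csucc (Aset \<omega>) (spine_vertex \<omega> d, j) = (branch_root \<omega> d, 0)"
    using csucc_spine_vertex[OF d] True by simp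
  ultimately show ?thesis by (blast intro: reaches_csucc reaches_trans reaches_csuccI)
next
  case False
  then have "csucc (Aset \<omega>) (spine_vertex \<omega> d, j) = (spine_vertex \<omega> (Suc d), 0)"
    using csucc_spine_vertex[OF d] j by (auto split: if_splits)
  then show ?thesis by (rule reaches_csuccI)
qed

lemma spine_corner_ascends:
  assumes d: "spine_start \<omega> \<le> d" and \<kappa>: "(spine_vertex \<omega> d, j) \<in> corners (Aset \<omega>)"
    and j: "(if Xv \<omega> (Suc d) then 1 else 0) < j"
  shows "reaches (Aset \<omega>) (spine_vertex \<omega> d, j) (tparent (spine_vertex \<omega> d), cidx (spine_vertex \<omega> d))"
proof -
  let ?v = "spine_vertex \<omega> d"
  have "j \<le> 2" using \<kappa> nch_spine_vertex[OF d] by (simp add: corners_def)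
  have r2: "reaches (Aset \<omega>) (?v, 2) (tparent ?v, cidx ?v)"
    using csucc_up[OF spine_vertex_nonroot(2)[OF d] nch_spine_vertex[OF d, symmetric]]
    by (rule reaches_csuccI)
  show ?thesis
  proof (cases "j = 2")
    case False
    with j \<open>j \<le> 2\<close> have "j = 1" "\<not> Xv \<omega> (Suc d)" by (auto split: if_splits)
    moreover have "reaches (Aset \<omega>) (branch_root \<omega> d, 0) (?v, 2)"
      using branch_sibling_returns[OF d] \<open>\<not> Xv \<omega> (Suc d)\<close> by simp
    moreover have "csucc (Aset \<omega>) (?v, 1) = (branch_root \<omega> d, 0)"
      using csucc_spine_vertex[OF d, of 1] \<open>\<not> Xv \<omega> (Suc d)\<close> by simp
    ultimately show ?thesis using r2 by (blast intro: reaches_csucc reaches_trans)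
  qed (use r2 in simp)
qed

lemma nonroot_corner_descends_or_climbs:
  assumes \<kappa>: "(v, j) \<in> corners (Aset \<omega>)" and v: "v \<noteq> [True]"
  shows "(\<exists>e\<ge>spine_start \<omega>. reaches (Aset \<omega>) (v, j) (spine_vertex \<omega> e, 0))
    \<or> reaches (Aset \<omega>) (v, j) (tparent v, cidx v)"
proof -
  have "v \<in> Aset \<omega>" "v \<noteq> []" using \<kappa> by (auto simp: corners_def)
  from this(1) show ?thesis
  proof (cases rule: Aset_cases)
    case (spine d)
    then have d: "spine_start \<omega> \<le> d" using spine_start_le \<open>v \<noteq> []\<close> v by blast
    show ?thesis
    proof (cases "j \<le> (if Xv \<omega> (Suc d) then 1 else 0)")
      case True
      then show ?thesis using spine spine_corner_descends[OF d] d le_SucI by blast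
    next
      case False
      then show ?thesis using spine spine_corner_ascends[OF d] \<kappa> by (simp add: not_le)
    qed
  next
    case (branch d u)
    then show ?thesis using branch_exits \<kappa> v by blast
  qed
qed

lemma root_child_returns:
  assumes \<kappa>: "([True], j) \<in> corners (Aset \<omega>)"
    and c: "csucc (Aset \<omega>) ([True], j) = (branch_root \<omega> d @ u, 0)"
  shows "reaches (Aset \<omega>) ([True], j) ([True], cidx (branch_root \<omega> d @ u))"
proof -
  let ?c = "branch_root \<omega> d @ u"
  have "?c \<in> {[False], [True, False], [True, True]}" using csucc_root_cases[of "Aset \<omega>" j] c by auto
  then have "?c \<noteq> [True]" "tparent ?c = [True]" by (auto simp: tparent_def)
  moreover have "(?c, 0) \<in> corners (Aset \<omega>)" using Aset.csucc_in_corners[OF \<kappa>] c by simp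
  ultimately show ?thesis using branch_exits[OF refl] by (metis reaches_csucc c)
qed

lemma root_of_degree_3:
  assumes "[True, False] \<in> Aset \<omega>"
  shows "nch (Aset \<omega>) [True] = 3" "([True], k) \<in> corners (Aset \<omega>) \<longleftrightarrow> k \<in> {1, 2, 3}"
    "csucc (Aset \<omega>) ([True], 1) = ([True, False], 0)" "csucc (Aset \<omega>) ([True], 2) = ([True, True], 0)"
    "csucc (Aset \<omega>) ([True], 3) = ([False], 0)"
  using assms Aset.singleton_mem by (auto simp: nch_root corners_def csucc_root children_root)

lemma root_corner_reaches_spine_X1:
  assumes X1: "Xv \<omega> 1" and \<kappa>: "([True], j) \<in> corners (Aset \<omega>)"
  shows "reaches (Aset \<omega>) ([True], j) (spine_vertex \<omega> 2, 0)"
proof -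
  have "[True, False] \<in> Aset \<omega>" using spine_child_mem[of \<omega> 1] X1 by (simp add: spine_vertex_Suc One_nat_def)
  note root = root_of_degree_3[OF this]
  have branches: "branch_root \<omega> 0 @ [] = [False]" "branch_root \<omega> 1 @ [] = [True, \<not> Xv \<omega> 2]"
    using X1 by (simp_all add: branch_root_def spine_vertex_Suc One_nat_def numeral_2_eq_2)
  have r3_r1: "reaches (Aset \<omega>) ([True], 3) ([True], 1)"
    using root_child_returns[of 3 0 "[]"] root branches by (simp add: cidx_def)
  have ret: "reaches (Aset \<omega>) ([True], k) ([True], if Xv \<omega> 2 then 2 else 3)"
    if "csucc (Aset \<omega>) ([True], k) = ([True, \<not> Xv \<omega> 2], 0)" "k \<in> {1, 2}" for k
    using root_child_returns[of k 1 "[]"] root branches that by (auto simp: cidx_def)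
  have "reaches (Aset \<omega>) ([True], k) (spine_vertex \<omega> 2, 0)" if "k \<in> {1, 2, 3}" for k
  proof (cases "Xv \<omega> 2")
    case True
    then have "reaches (Aset \<omega>) ([True], 2) (spine_vertex \<omega> 2, 0)"
      using root X1 by (simp add: spine_vertex_2 reaches_csuccI)
    moreover from this have "reaches (Aset \<omega>) ([True], 1) (spine_vertex \<omega> 2, 0)"
      using ret[of 1] root True reaches_trans by auto
    ultimately show ?thesis using that r3_r1 reaches_trans by auto
  next
    case False
    then have "reaches (Aset \<omega>) ([True], 1) (spine_vertex \<omega> 2, 0)"
      using root X1 by (simp add: spine_vertex_2 reaches_csuccI)
    moreover from this have "reaches (Aset \<omega>) ([True], 3) (spine_vertex \<omega> 2, 0)"
      using r3_r1 reaches_trans by blast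
    moreover from this have "reaches (Aset \<omega>) ([True], 2) (spine_vertex \<omega> 2, 0)"
      using ret[of 2] root False reaches_trans by auto
    ultimately show ?thesis using that by auto
  qed
  then show ?thesis using \<kappa> root by simp
qed

lemma root_corner_reaches_spine_not_X1:
  assumes X1: "\<not> Xv \<omega> 1" and \<kappa>: "([True], j) \<in> corners (Aset \<omega>)"
  shows "reaches (Aset \<omega>) ([True], j) (spine_vertex \<omega> 1, 0)"
proof (cases "[True, False] \<in> Aset \<omega>")
  case True
  note root = root_of_degree_3[OF True]
  have branch: "branch_root \<omega> 0 @ [b] = [True, b]" for b
    using X1 by (simp add: branch_root_def)
  have r3: "reaches (Aset \<omega>) ([True], 3) (spine_vertex \<omega> 1, 0)"
    using root X1 by (simp add: spine_vertex_Suc One_nat_def reaches_csuccI)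
  moreover have r2: "reaches (Aset \<omega>) ([True], 2) (spine_vertex \<omega> 1, 0)"
    using root_child_returns[of 2 0 "[True]"] root branch[of True] reaches_trans[OF _ r3]
    by (simp add: cidx_def)
  moreover have "reaches (Aset \<omega>) ([True], 1) (spine_vertex \<omega> 1, 0)"
    using root_child_returns[of 1 0 "[False]"] root branch[of False] reaches_trans[OF _ r2]
    by (simp add: cidx_def)
  ultimately show ?thesis using \<kappa> root by auto
next
  case False
  then have "j = 1" using \<kappa> by (simp add: corners_def nch_root)
  then show ?thesis using False X1
    by (simp add: spine_vertex_Suc One_nat_def csucc_root children_root nch_root reaches_csuccI)
qed

lemma root_corner_reaches_spine:
  "([True], j) \<in> corners (Aset \<omega>) \<Longrightarrow>
    reaches (Aset \<omega>) ([True], j) (spine_vertex \<omega> (spine_start \<omega>), 0)"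
  using root_corner_reaches_spine_X1 root_corner_reaches_spine_not_X1
  by (simp add: spine_start_def)

lemma corner_reaches_spine:
  assumes "(v, j) \<in> corners (Aset \<omega>)"
  shows "\<exists>e\<ge>spine_start \<omega>. reaches (Aset \<omega>) (v, j) (spine_vertex \<omega> e, 0)"
  using assms
proof (induction "length v" arbitrary: v j rule: less_induct)
  case less
  show ?case
  proof (cases "v = [True]")
    case False
    from nonroot_corner_descends_or_climbs[OF less.prems False] show ?thesis
    proof
      assume up: "reaches (Aset \<omega>) (v, j) (tparent v, cidx v)"
      have "v \<in> Aset \<omega>" "v \<noteq> []" using less.prems by (auto simp: corners_def)
      then have pc: "(tparent v, cidx v) \<in> corners (Aset \<omega>)" using Aset.parent_corner False by blast
      show ?thesis
      proof (cases "tparent v = [True]")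
        case True
        then show ?thesis using root_corner_reaches_spine pc reaches_trans[OF up] by fastforce
      next
        case False
        then have "length (tparent v) < length v"
          using \<open>v \<noteq> []\<close> by (simp add: tparent_def split: if_splits)
        then show ?thesis using less.hyps[OF _ pc] reaches_trans[OF up] by blast
      qed
    qed
  qed (use root_corner_reaches_spine less.prems in blast)
qed

lemma spine_corners_reach:
  assumes "spine_start \<omega> \<le> d"
  shows "d \<le> e \<Longrightarrow> reaches (Aset \<omega>) (spine_vertex \<omega> d, 0) (spine_vertex \<omega> e, 0)"
proof (induction e)
  case (Suc e)
  show ?case
  proof (cases "d = Suc e")
    case False
    then have "d \<le> e" using Suc.prems by simp
    then show ?thesis using Suc.IH spine_corner_descends[of e 0] assms reaches_trans by auto
  qed simp
qed simp

lemma corner_eventually_reaches_spine: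
  assumes "\<kappa> \<in> corners (Aset \<omega>)"
  shows "\<exists>e\<^sub>0. \<forall>e\<ge>e\<^sub>0. reaches (Aset \<omega>) \<kappa> (spine_vertex \<omega> e, 0)"
proof -
  obtain e where "spine_start \<omega> \<le> e" "reaches (Aset \<omega>) \<kappa> (spine_vertex \<omega> e, 0)"
    using corner_reaches_spine assms by (cases \<kappa>) blast
  then show ?thesis using spine_corners_reach reaches_trans by blast
qed

lemma label_Aset: "label (Aset \<omega>) = corner_label (Aset \<omega>)"
proof (rule Aset.label_eqI[OF Aset.corner_label_is_labelling])
  fix \<kappa> assume "\<kappa> \<in> corners (Aset \<omega>)"
  then obtain e where "\<forall>e'\<ge>e. reaches (Aset \<omega>) \<kappa> (spine_vertex \<omega> e', 0)"
    using corner_eventually_reaches_spine by blast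
  moreover obtain e\<^sub>\<rho> where "\<forall>e'\<ge>e\<^sub>\<rho>. reaches (Aset \<omega>) (rho (Aset \<omega>)) (spine_vertex \<omega> e', 0)"
    using corner_eventually_reaches_spine Aset.rho_in_corners by blast
  ultimately show "\<exists>\<mu>. reaches (Aset \<omega>) \<kappa> \<mu> \<and> reaches (Aset \<omega>) (rho (Aset \<omega>)) \<mu>"
    by (metis max.cobounded1 max.cobounded2)
qed

lemma csucc_orbit_inj:
  assumes \<kappa>: "\<kappa> \<in> corners (Aset \<omega>)" and eq: "(csucc (Aset \<omega>) ^^ m) \<kappa> = (csucc (Aset \<omega>) ^^ n) \<kappa>"
  shows "m = n"
proof (rule funpow_eq_imp_eq_of_infinite_orbit[OF _ eq])
  show "infinite (range (\<lambda>n. (csucc (Aset \<omega>) ^^ n) \<kappa>))"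
  proof
    assume "finite (range (\<lambda>n. (csucc (Aset \<omega>) ^^ n) \<kappa>))"
    then obtain B where B: "\<And>n. length (fst ((csucc (Aset \<omega>) ^^ n) \<kappa>)) < B"
      using finite_maxlen[of "fst ` range (\<lambda>n. (csucc (Aset \<omega>) ^^ n) \<kappa>)"] by auto
    obtain e where "\<forall>e'\<ge>e. reaches (Aset \<omega>) \<kappa> (spine_vertex \<omega> e', 0)"
      using corner_eventually_reaches_spine \<kappa> by blast
    then obtain k where "(csucc (Aset \<omega>) ^^ k) \<kappa> = (spine_vertex \<omega> (max e B), 0)"
      unfolding reaches_def using max.cobounded1 by blast
    with B[of k] show False by simp
  qed
qed

lemma label_spine_corner:
  assumes "spine_start \<omega> \<le> d"
  shows "label (Aset \<omega>) (spine_vertex \<omega> d, 0) = entry_label (spine_vertex \<omega> d)"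
proof -
  have "(spine_vertex \<omega> d, 0) \<in> corners (Aset \<omega>)"
    using spine_vertex_nonroot[OF assms] by (simp add: corners_def)
  then show ?thesis using spine_vertex_nonroot(2)[OF assms] by (simp add: label_Aset corner_label_nonroot)
qed

lemma label_drops:
  assumes walk: "\<forall>M::nat. \<exists>n. spine_walk \<omega> n \<le> - int M" and \<kappa>: "\<kappa> \<in> corners (Aset \<omega>)"
  shows "\<exists>n>0. label (Aset \<omega>) ((csucc (Aset \<omega>) ^^ n) \<kappa>) \<le> label (Aset \<omega>) \<kappa> - 6"
proof -
  obtain e where e: "\<forall>e'\<ge>e. reaches (Aset \<omega>) \<kappa> (spine_vertex \<omega> e', 0)"
    using corner_eventually_reaches_spine \<kappa> by blast
  obtain n where n: "spine_walk \<omega> n \<le> - int (nat \<bar>label (Aset \<omega>) \<kappa>\<bar> + 8 + e)"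
    using walk by blast
  then have "e + 1 \<le> n" using spine_walk_ge[of n \<omega>] by linarith
  then have "spine_start \<omega> \<le> Suc n" by (simp add: spine_start_def)
  then have low: "label (Aset \<omega>) (spine_vertex \<omega> (Suc n), 0) \<le> label (Aset \<omega>) \<kappa> - 6"
    using n by (simp add: label_spine_corner entry_label_spine_vertex) linarith
  obtain m where m: "(csucc (Aset \<omega>) ^^ m) \<kappa> = (spine_vertex \<omega> (Suc n), 0)"
  proof -
    have "e \<le> Suc n" using \<open>e + 1 \<le> n\<close> by simp
    then show ?thesis using e that unfolding reaches_def by blast
  qed
  with low have "m \<noteq> 0" by (cases m) auto
  with m low show ?thesis by auto
qed

lemma contour_conclusions_Aset:
  assumes "\<forall>M::nat. \<exists>n. spine_walk \<omega> n \<le> - int M"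
  shows "(\<forall>\<kappa>\<in>corners (Aset \<omega>). \<exists>\<kappa>'\<in>corners (Aset \<omega>). cprec (Aset \<omega>) \<kappa> \<kappa>' \<and>
            label (Aset \<omega>) \<kappa>' \<le> label (Aset \<omega>) \<kappa> -
              (if cprec (Aset \<omega>) \<kappa> (rho (Aset \<omega>)) \<and> cpreceq (Aset \<omega>) (rho (Aset \<omega>)) \<kappa>' then 6 else 0))
       \<and> (\<forall>\<kappa>\<in>corners (Aset \<omega>). is_bud_corner (Aset \<omega>) \<kappa> \<longrightarrow> attach_corner (Aset \<omega>) \<kappa> \<noteq> None)"
  using csucc_orbit_inj label_drops[OF assms] by (rule Aset.contour_conclusions)

end

section \<open>The simple random walk is unbounded below\<close>

abbreviation coin :: "bool measure" where
  "coin \<equiv> measure_pmf (bernoulli_pmf (1/2))"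

abbreviation coins :: "('i \<Rightarrow> bool) measure" where
  "coins \<equiv> PiM UNIV (\<lambda>_. coin)"

lemma space_coins [simp]: "space coins = UNIV"
  by (simp add: space_PiM)

lemma prob_space_coins: "prob_space coins"
  by (intro prob_space_PiM prob_space_measure_pmf)

lemma pair_prob_space_coins: "pair_prob_space coins coins"
  by (simp add: pair_prob_space_def pair_sigma_finite_def prob_space_coins prob_space_imp_sigma_finite)

lemma measurable_coin_coordinate [measurable]: "(\<lambda>y. y i) \<in> measurable coins (count_space UNIV)"
proof -
  have "(\<lambda>y. y i) \<in> measurable coins coin" by (rule measurable_component_singleton) simp
  moreover have "measurable coins coin = measurable coins (count_space UNIV)"
    by (rule measurable_cong_sets) simp_all
  ultimately show ?thesis by simp
qed

definition walk :: "(nat \<Rightarrow> bool) \<Rightarrow> nat \<Rightarrow> int" where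
  "walk y n = (\<Sum>i<n. if y i then 1 else -1)"

lemma walk_0 [simp]: "walk y 0 = 0"
  by (simp add: walk_def)

lemma walk_case_nat: "walk (case_nat b y) (Suc n) = (if b then 1 else -1) + walk y n"
  unfolding walk_def sum.lessThan_Suc_shift by simp

lemma measurable_walk [measurable]: "(\<lambda>y. walk y n) \<in> measurable coins (count_space UNIV)"
proof (induction n)
  case (Suc n)
  have "(\<lambda>y. walk y (Suc n)) = (\<lambda>y. (\<lambda>w y. w + (if y n then 1 else -1)) (walk y n) y)"
    by (simp add: walk_def)
  then show ?case by (simp only:) (rule measurable_compose_countable[OF _ Suc], measurable)
qed (simp add: walk_def)

definition stays_positive :: "int \<Rightarrow> (nat \<Rightarrow> bool) set" where
  "stays_positive x = {y \<in> space coins. \<forall>n. 0 < x + walk y n}"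

lemma stays_positive_sets [measurable]: "stays_positive x \<in> sets coins"
proof -
  have [measurable]: "Measurable.pred coins (\<lambda>y. 0 < x + walk y n)" for n
    using measurable_compose[OF measurable_walk, of "\<lambda>w. 0 < x + w" "count_space UNIV" n] by simp
  show ?thesis unfolding stays_positive_def by measurable
qed

lemma stays_positive_nonpos: "x \<le> 0 \<Longrightarrow> stays_positive x = {}"
  by (auto simp: stays_positive_def intro!: exI[of _ 0])

lemma stays_positive_case_nat:
  "0 < x \<Longrightarrow> case_nat b y \<in> stays_positive x \<longleftrightarrow> y \<in> stays_positive (x + (if b then 1 else -1))"
proof -
  assume x: "0 < x"
  have "(\<forall>n. 0 < x + walk (case_nat b y) n) \<longleftrightarrow> (\<forall>n. 0 < x + walk (case_nat b y) (Suc n))"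
    using x by (metis walk_0 add.right_neutral not0_implies_Suc)
  then show ?thesis by (simp add: stays_positive_def walk_case_nat add.assoc)
qed

definition stay_prob :: "int \<Rightarrow> real" where
  "stay_prob x = measure coins (stays_positive x)"

text \<open>First-step analysis: the first coin is independent of the remaining ones.\<close>
lemma emeasure_stays_positive_step:
  assumes x: "0 < x"
  shows "emeasure coins (stays_positive x) =
    emeasure coins (stays_positive (x + 1)) * ennreal (1/2) + emeasure coins (stays_positive (x - 1)) * ennreal (1/2)"
proof -
  interpret prob_space "coins :: (nat \<Rightarrow> bool) measure" by (rule prob_space_coins)
  interpret sequence_space coin by unfold_locales
  let ?g = "\<lambda>(s, y). case_nat s y :: nat \<Rightarrow> bool"
  have g: "?g \<in> measurable (coin \<Otimes>\<^sub>M coins) coins" by measurable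
  have "emeasure coins (stays_positive x) = emeasure (distr (coin \<Otimes>\<^sub>M coins) coins ?g) (stays_positive x)"
    by (simp add: PiM_iter)
  also have "\<dots> = emeasure (coin \<Otimes>\<^sub>M coins) (?g -` stays_positive x \<inter> space (coin \<Otimes>\<^sub>M coins))"
    by (rule emeasure_distr[OF g stays_positive_sets])
  also have "\<dots> = (\<integral>\<^sup>+b. emeasure coins (Pair b -` (?g -` stays_positive x \<inter> space (coin \<Otimes>\<^sub>M coins))) \<partial>coin)"
    by (rule emeasure_pair_measure_alt) (rule measurable_sets[OF g stays_positive_sets])
  also have "\<dots> = (\<integral>\<^sup>+b. emeasure coins (stays_positive (x + (if b then 1 else -1))) \<partial>coin)"
  proof (rule nn_integral_cong)
    fix b :: bool
    have "Pair b -` (?g -` stays_positive x \<inter> space (coin \<Otimes>\<^sub>M coins)) = stays_positive (x + (if b then 1 else -1))"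
      using stays_positive_case_nat[OF x, of b] by (auto simp: space_pair_measure stays_positive_def)
    then show "emeasure coins (Pair b -` (?g -` stays_positive x \<inter> space (coin \<Otimes>\<^sub>M coins))) =
        emeasure coins (stays_positive (x + (if b then 1 else -1)))" by simp
  qed
  also have "\<dots> = emeasure coins (stays_positive (x + 1)) * ennreal (1/2) + emeasure coins (stays_positive (x - 1)) * ennreal (1/2)"
    by (subst nn_integral_measure_pmf_finite) (auto simp: UNIV_bool)
  finally show ?thesis .
qed

lemma stay_prob_harmonic: "0 < x \<Longrightarrow> stay_prob x = (stay_prob (x + 1) + stay_prob (x - 1)) / 2"
proof -
  interpret prob_space "coins :: (nat \<Rightarrow> bool) measure" by (rule prob_space_coins)
  assume x: "0 < x"
  have nonneg: "0 \<le> stay_prob y" for y by (simp add: stay_prob_def)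
  have "ennreal (stay_prob x) =
      ennreal (stay_prob (x + 1)) * ennreal (1/2) + ennreal (stay_prob (x - 1)) * ennreal (1/2)"
    using emeasure_stays_positive_step[OF x] by (simp add: stay_prob_def emeasure_eq_measure)
  also have "\<dots> = ennreal (stay_prob (x + 1) * (1/2)) + ennreal (stay_prob (x - 1) * (1/2))"
    using ennreal_mult[of "stay_prob (x + 1)" "1/2"] ennreal_mult[of "stay_prob (x - 1)" "1/2"] nonneg
    by simp
  also have "\<dots> = ennreal ((stay_prob (x + 1) + stay_prob (x - 1)) / 2)"
    using nonneg by (simp add: ennreal_plus[symmetric] add_divide_distrib del: ennreal_plus)
  finally show ?thesis using nonneg by (subst (asm) ennreal_inj) auto
qed

lemma stay_prob_linear: "stay_prob (int n) = real n * stay_prob 1"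
proof -
  have "stay_prob (int n) = real n * stay_prob 1 \<and> stay_prob (int (Suc n)) = real (Suc n) * stay_prob 1"
  proof (induction n)
    case (Suc n)
    have "stay_prob (int (Suc n)) = (stay_prob (int (Suc n) + 1) + stay_prob (int (Suc n) - 1)) / 2"
      by (rule stay_prob_harmonic) simp
    then have "stay_prob (int (Suc (Suc n))) = 2 * stay_prob (int (Suc n)) - stay_prob (int n)"
      by (simp add: add.commute)
    with Suc show ?case by (simp add: algebra_simps)
  qed (simp add: stay_prob_def stays_positive_nonpos)
  then show ?thesis ..
qed

lemma stay_prob_eq_0: "stay_prob (int n) = 0"
proof -
  interpret prob_space "coins :: (nat \<Rightarrow> bool) measure" by (rule prob_space_coins)
  have "stay_prob 1 = 0"
  proof (rule ccontr)
    assume "stay_prob 1 \<noteq> 0"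
    then have "0 < stay_prob 1" by (simp add: stay_prob_def zero_less_measure_iff)
    then obtain m where "1 < real m * stay_prob 1" using ex_less_of_nat_mult by blast
    moreover have "stay_prob (int m) \<le> 1" unfolding stay_prob_def by (rule prob_le_1)
    ultimately show False by (simp add: stay_prob_linear)
  qed
  then show ?thesis by (simp add: stay_prob_linear)
qed

lemma AE_walk_unbounded_below: "AE y in coins. \<forall>M::nat. \<exists>n. walk y n \<le> - int M"
proof (subst AE_all_countable, intro allI)
  interpret prob_space "coins :: (nat \<Rightarrow> bool) measure" by (rule prob_space_coins)
  fix M :: nat
  have "stays_positive (int M) \<in> null_sets coins"
    using stay_prob_eq_0[of M] by (simp add: stay_prob_def emeasure_eq_measure null_sets_def)
  moreover have "{y \<in> space coins. \<not> (\<exists>n. walk y n \<le> - int M)} \<subseteq> stays_positive (int M)"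
  proof
    fix y assume "y \<in> {y \<in> space coins. \<not> (\<exists>n. walk y n \<le> - int M)}"
    then have "\<forall>n. - int M < walk y n" by (simp add: not_le)
    then have "0 < int M + walk y n" for n by (metis add.commute diff_0 diff_less_eq)
    then show "y \<in> stays_positive (int M)" by (simp add: stays_positive_def)
  qed
  ultimately show "AE y in coins. \<exists>n. walk y n \<le> - int M" by (rule AE_I')
qed

section \<open>Critical binary Galton-Watson trees are finite\<close>

definition join_subtrees :: "bool \<times> (bool list \<Rightarrow> bool) \<times> (bool list \<Rightarrow> bool) \<Rightarrow> bool list \<Rightarrow> bool" where
  "join_subtrees p u = (case u of [] \<Rightarrow> fst p | c # v \<Rightarrow> if c then snd (snd p) v else fst (snd p) v)"

lemma mem_prod_emb_coins: "f \<in> prod_emb UNIV (\<lambda>_. coin) J (Pi\<^sub>E J A) \<longleftrightarrow> (\<forall>j\<in>J. f j \<in> A j)"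
  by (auto simp: prod_emb_def space_PiM PiE_iff)

lemma measurable_join_subtrees: "join_subtrees \<in> measurable (coin \<Otimes>\<^sub>M (coins \<Otimes>\<^sub>M coins)) coins"
proof (rule measurable_PiM_single')
  fix u :: "bool list"
  show "(\<lambda>p. join_subtrees p u) \<in> measurable (coin \<Otimes>\<^sub>M (coins \<Otimes>\<^sub>M coins)) coin"
  proof (cases u)
    case Nil
    then show ?thesis by (simp add: join_subtrees_def)
  next
    case (Cons c v)
    show ?thesis
    proof (cases c)
      case True
      have "(\<lambda>p. snd (snd p) v) \<in> measurable (coin \<Otimes>\<^sub>M (coins \<Otimes>\<^sub>M coins)) coin"
        by (rule measurable_compose[OF measurable_snd measurable_compose[OF measurable_snd measurable_component_singleton]]) simp
      then show ?thesis using Cons True by (simp add: join_subtrees_def)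
    next
      case False
      have "(\<lambda>p. fst (snd p) v) \<in> measurable (coin \<Otimes>\<^sub>M (coins \<Otimes>\<^sub>M coins)) coin"
        by (rule measurable_compose[OF measurable_snd measurable_compose[OF measurable_fst measurable_component_singleton]]) simp
      then show ?thesis using Cons False by (simp add: join_subtrees_def)
    qed
  qed
qed (simp add: space_PiM)

lemma prod_bool_lists_split:
  fixes g :: "bool list \<Rightarrow> 'a::comm_monoid_mult"
  assumes J: "finite J"
  shows "(\<Prod>j\<in>J. g j) = (if [] \<in> J then g [] else 1) *
     ((\<Prod>v\<in>{v. False # v \<in> J}. g (False # v)) * (\<Prod>v\<in>{v. True # v \<in> J}. g (True # v)))"
proof -
  let ?L = "{v. False # v \<in> J}" and ?R = "{v. True # v \<in> J}"
  have fL: "finite ?L" "finite ?R" using J by (auto intro: finite_vimageI[of J "Cons _", unfolded vimage_def])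
  have Jeq: "J = (J \<inter> {[]}) \<union> ((Cons False ` ?L) \<union> (Cons True ` ?R))"
    by (auto simp: image_iff) (metis list.exhaust)
  have "(\<Prod>j\<in>J. g j) = (\<Prod>j\<in>J \<inter> {[]}. g j) * (\<Prod>j\<in>(Cons False ` ?L) \<union> (Cons True ` ?R). g j)"
    using J fL by (subst Jeq, subst prod.union_disjoint) auto
  also have "(\<Prod>j\<in>(Cons False ` ?L) \<union> (Cons True ` ?R). g j) =
     (\<Prod>j\<in>Cons False ` ?L. g j) * (\<Prod>j\<in>Cons True ` ?R. g j)"
    using fL by (intro prod.union_disjoint) auto
  also have "(\<Prod>j\<in>Cons False ` ?L. g j) = (\<Prod>v\<in>?L. g (False # v))"
    by (subst prod.reindex) (auto simp: inj_on_def)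
  also have "(\<Prod>j\<in>Cons True ` ?R. g j) = (\<Prod>v\<in>?R. g (True # v))"
    by (subst prod.reindex) (auto simp: inj_on_def)
  also have "(\<Prod>j\<in>J \<inter> {[]}. g j) = (if [] \<in> J then g [] else 1)"
    by (auto simp: Int_absorb1 Int_absorb2 Int_insert_right)
  finally show ?thesis .
qed

lemma vimage_join_subtrees_prod_emb:
  "join_subtrees -` prod_emb UNIV (\<lambda>_. coin) J (Pi\<^sub>E J A) \<inter> space (coin \<Otimes>\<^sub>M (coins \<Otimes>\<^sub>M coins)) =
    (if [] \<in> J then A [] else UNIV) \<times>
      (prod_emb UNIV (\<lambda>_. coin) {v. False # v \<in> J} (Pi\<^sub>E {v. False # v \<in> J} (\<lambda>v. A (False # v))) \<times>
       prod_emb UNIV (\<lambda>_. coin) {v. True # v \<in> J} (Pi\<^sub>E {v. True # v \<in> J} (\<lambda>v. A (True # v))))"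
    (is "?lhs = ?A0 \<times> (?XL \<times> ?XR)")
proof (intro set_eqI iffI)
  fix p assume "p \<in> ?lhs"
  then have h: "\<forall>j\<in>J. join_subtrees p j \<in> A j" by (simp add: mem_prod_emb_coins)
  obtain b l r where p: "p = (b, l, r)" by (cases p) auto
  show "p \<in> ?A0 \<times> (?XL \<times> ?XR)"
    using h unfolding p by (auto simp: mem_prod_emb_coins join_subtrees_def)
next
  fix p assume h: "p \<in> ?A0 \<times> (?XL \<times> ?XR)"
  obtain b l r where p: "p = (b, l, r)" by (cases p) auto
  have "join_subtrees p j \<in> A j" if j: "j \<in> J" for j
  proof (cases j)
    case Nil
    then show ?thesis using h j p by (simp add: join_subtrees_def)
  next
    case (Cons c v)
    then show ?thesis using h j p by (cases c) (auto simp: join_subtrees_def mem_prod_emb_coins)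
  qed
  then show "p \<in> ?lhs" by (simp add: mem_prod_emb_coins space_pair_measure)
qed

lemma distr_join_subtrees: "distr (coin \<Otimes>\<^sub>M (coins \<Otimes>\<^sub>M coins)) coins join_subtrees = coins"
proof (rule measure_eqI_PiM_infinite[symmetric, OF refl])
  interpret T: prob_space "coins :: (bool list \<Rightarrow> bool) measure" by (rule prob_space_coins)
  interpret TT: pair_prob_space "coins :: (bool list \<Rightarrow> bool) measure" coins
    by (rule pair_prob_space_coins)
  show "finite_measure coins" by unfold_locales
  fix A J assume J: "finite J" "J \<subseteq> (UNIV :: bool list set)" and A: "\<And>i. i \<in> J \<Longrightarrow> A i \<in> sets coin"
  let ?X = "prod_emb UNIV (\<lambda>_. coin) J (Pi\<^sub>E J A)"
  let ?L = "{v. False # v \<in> J}" and ?R = "{v. True # v \<in> J}"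
  have fL: "finite ?L" "finite ?R" using J by (auto intro: finite_vimageI[of J "Cons _", unfolded vimage_def])
  let ?A0 = "if [] \<in> J then A [] else UNIV"
  let ?XL = "prod_emb UNIV (\<lambda>_. coin) ?L (Pi\<^sub>E ?L (\<lambda>v. A (False # v)))"
  let ?XR = "prod_emb UNIV (\<lambda>_. coin) ?R (Pi\<^sub>E ?R (\<lambda>v. A (True # v)))"
  have pre: "join_subtrees -` ?X \<inter> space (coin \<Otimes>\<^sub>M (coins \<Otimes>\<^sub>M coins)) = ?A0 \<times> (?XL \<times> ?XR)"
    by (rule vimage_join_subtrees_prod_emb)
  have sX: "?X \<in> sets coins" using J A by (intro sets_PiM_I) auto
  have sL: "?XL \<in> sets coins" "?XR \<in> sets coins" using fL by (auto intro!: sets_PiM_I)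
  have "emeasure (distr (coin \<Otimes>\<^sub>M (coins \<Otimes>\<^sub>M coins)) coins join_subtrees) ?X = emeasure (coin \<Otimes>\<^sub>M (coins \<Otimes>\<^sub>M coins)) (?A0 \<times> (?XL \<times> ?XR))"
    using emeasure_distr[OF measurable_join_subtrees sX] pre by simp
  also have "\<dots> = emeasure coin ?A0 * emeasure (coins \<Otimes>\<^sub>M coins) (?XL \<times> ?XR)"
    using sL by (intro TT.emeasure_pair_measure_Times) (auto simp: sets_pair_measure intro!: sigma_sets.Basic)
  also have "emeasure (coins \<Otimes>\<^sub>M coins) (?XL \<times> ?XR) = emeasure coins ?XL * emeasure coins ?XR"
    using sL by (rule T.emeasure_pair_measure_Times)
  also have "emeasure coins ?XL = (\<Prod>v\<in>?L. emeasure coin (A (False # v)))"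
    using fL by (intro emeasure_PiM_emb prob_space_measure_pmf) auto
  also have "emeasure coins ?XR = (\<Prod>v\<in>?R. emeasure coin (A (True # v)))"
    using fL by (intro emeasure_PiM_emb prob_space_measure_pmf) auto
  also have "emeasure coin ?A0 = (if [] \<in> J then emeasure coin (A []) else 1)"
    using measure_pmf.emeasure_space_1[of "bernoulli_pmf (1/2)"] by simp
  also have "(if [] \<in> J then emeasure coin (A []) else 1) *
     ((\<Prod>v\<in>?L. emeasure coin (A (False # v))) * (\<Prod>v\<in>?R. emeasure coin (A (True # v)))) =
     (\<Prod>j\<in>J. emeasure coin (A j))"
    by (rule prod_bool_lists_split[OF J(1), symmetric])
  also have "\<dots> = emeasure coins ?X"
    using J A by (intro emeasure_PiM_emb[symmetric] prob_space_measure_pmf) auto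
  finally show "emeasure coins ?X = emeasure (distr (coin \<Otimes>\<^sub>M (coins \<Otimes>\<^sub>M coins)) coins join_subtrees) ?X" ..
qed simp

definition survives :: "nat \<Rightarrow> (bool list \<Rightarrow> bool) set" where
  "survives n = {t \<in> space coins. \<exists>u. length u = n \<and> (\<forall>k<n. t (take k u))}"

lemma survives_sets[measurable]: "survives n \<in> sets coins"
  unfolding survives_def by measurable

lemma join_subtrees_survives_Suc: "join_subtrees (b, l, r) \<in> survives (Suc n) \<longleftrightarrow> b \<and> (l \<in> survives n \<or> r \<in> survives n)"
proof
  assume "join_subtrees (b, l, r) \<in> survives (Suc n)"
  then obtain u where u: "length u = Suc n" "\<forall>k<Suc n. join_subtrees (b, l, r) (take k u)" by (auto simp: survives_def)
  then obtain c v where cv: "u = c # v" by (cases u) auto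
  have "b" using u(2)[rule_format, of 0] by (simp add: join_subtrees_def)
  moreover have "\<forall>k<n. (if c then r else l) (take k v)"
    using u(2) cv by (auto simp: join_subtrees_def)
  ultimately show "b \<and> (l \<in> survives n \<or> r \<in> survives n)" using u(1) cv by (cases c) (auto simp: survives_def)
next
  assume h: "b \<and> (l \<in> survives n \<or> r \<in> survives n)"
  show "join_subtrees (b, l, r) \<in> survives (Suc n)"
  proof (cases "l \<in> survives n")
    case True
    then obtain v where v: "length v = n" "\<forall>k<n. l (take k v)" by (auto simp: survives_def)
    have "\<forall>k<Suc n. join_subtrees (b, l, r) (take k (False # v))"
      using v h by (auto simp: join_subtrees_def less_Suc_eq_0_disj)
    then show ?thesis using v(1) by (auto simp: survives_def intro!: exI[of _ "False # v"])
  next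
    case False
    then obtain v where v: "length v = n" "\<forall>k<n. r (take k v)" using h by (auto simp: survives_def)
    have "\<forall>k<Suc n. join_subtrees (b, l, r) (take k (True # v))"
      using v h by (auto simp: join_subtrees_def less_Suc_eq_0_disj)
    then show ?thesis using v(1) by (auto simp: survives_def intro!: exI[of _ "True # v"])
  qed
qed

lemma (in prob_space) prob_pair_either:
  assumes S: "S \<in> events"
  shows "measure (M \<Otimes>\<^sub>M M) ((S \<times> space M) \<union> (space M \<times> S)) = 1 - (1 - prob S)\<^sup>2"
proof -
  interpret MM: pair_prob_space M M by unfold_locales
  let ?C = "(space M - S) \<times> (space M - S)"
  have C: "?C \<in> MM.events" using S by (intro pair_measureI) auto
  have "emeasure (M \<Otimes>\<^sub>M M) ?C = emeasure M (space M - S) * emeasure M (space M - S)"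
    using S by (intro emeasure_pair_measure_Times) auto
  then have "MM.prob ?C = (1 - prob S) * (1 - prob S)"
    using S prob_compl[OF S] by (simp add: emeasure_eq_measure MM.emeasure_eq_measure
        ennreal_mult''[symmetric] del: ennreal_mult'')
  moreover have "(S \<times> space M) \<union> (space M \<times> S) = space (M \<Otimes>\<^sub>M M) - ?C"
    using sets.sets_into_space[OF S] by (auto simp: space_pair_measure)
  ultimately show ?thesis using MM.prob_compl[OF C] by (simp add: power2_eq_square)
qed

lemma measure_survives_Suc:
  "measure coins (survives (Suc n)) = (1 - (1 - measure coins (survives n))\<^sup>2) / 2"
proof -
  interpret T: prob_space "coins :: (bool list \<Rightarrow> bool) measure" by (rule prob_space_coins)
  interpret TT: pair_prob_space "coins :: (bool list \<Rightarrow> bool) measure" coins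
    by (rule pair_prob_space_coins)
  let ?p = "measure coins (survives n)"
  let ?Q = "(survives n \<times> space coins) \<union> (space coins \<times> survives n)"
  have Q: "?Q \<in> sets (coins \<Otimes>\<^sub>M coins)" using survives_sets by (intro sets.Un pair_measureI sets.top)
  have pQ: "measure (coins \<Otimes>\<^sub>M coins) ?Q = 1 - (1 - ?p)\<^sup>2"
    by (rule T.prob_pair_either[OF survives_sets])
  have "join_subtrees -` survives (Suc n) \<inter> space (coin \<Otimes>\<^sub>M (coins \<Otimes>\<^sub>M coins)) = {True} \<times> ?Q"
    by (auto simp: join_subtrees_survives_Suc space_pair_measure)
  then have "emeasure coins (survives (Suc n)) = emeasure (coin \<Otimes>\<^sub>M (coins \<Otimes>\<^sub>M coins)) ({True} \<times> ?Q)"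
    using emeasure_distr[OF measurable_join_subtrees survives_sets] by (simp add: distr_join_subtrees)
  also have "\<dots> = emeasure coin {True} * emeasure (coins \<Otimes>\<^sub>M coins) ?Q"
    using Q by (intro TT.emeasure_pair_measure_Times) simp
  also have "\<dots> = ennreal (1/2) * ennreal (1 - (1 - ?p)\<^sup>2)"
    using pQ by (simp add: TT.emeasure_eq_measure emeasure_pmf_single)
  also have "\<dots> = ennreal ((1 - (1 - ?p)\<^sup>2) / 2)"
    using ennreal_mult[of "1/2" "1 - (1 - ?p)\<^sup>2"] pQ measure_nonneg[of "coins \<Otimes>\<^sub>M coins" ?Q]
    by simp
  finally show ?thesis
    using pQ measure_nonneg[of "coins \<Otimes>\<^sub>M coins" ?Q] by (simp add: T.emeasure_eq_measure)
qed

text \<open>\<open>p \<mapsto> p - p\<^sup>2/2\<close> is increasing on \<open>[0, 1]\<close> and maps \<open>2/a\<close> below \<open>2/(a + 1)\<close>.\<close>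
lemma halved_square_step_le:
  fixes p a :: real
  assumes p: "0 \<le> p" "p \<le> 2 / a" and a: "2 \<le> a"
  shows "p - p\<^sup>2 / 2 \<le> 2 / (a + 1)"
proof -
  define q where "q = 2 / a"
  have "q \<le> 1" using a by (simp add: q_def)
  have "(q - q\<^sup>2 / 2) - (p - p\<^sup>2 / 2) = (q - p) * (1 - (q + p) / 2)"
    by (simp add: power2_eq_square field_simps)
  also have "\<dots> \<ge> 0" using p \<open>q \<le> 1\<close> by (intro mult_nonneg_nonneg) (simp_all add: q_def)
  finally have "p - p\<^sup>2 / 2 \<le> q - q\<^sup>2 / 2" by simp
  moreover have "2 / (a + 1) - (q - q\<^sup>2 / 2) = 2 / (a\<^sup>2 * (a + 1))"
    using a by (simp add: q_def power2_eq_square field_simps)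
  moreover have "0 \<le> 2 / (a\<^sup>2 * (a + 1))" using a by simp
  ultimately show ?thesis by linarith
qed

lemma measure_survives_le: "measure coins (survives n) \<le> 2 / (real n + 2)"
proof (induction n)
  interpret prob_space "coins :: (bool list \<Rightarrow> bool) measure" by (rule prob_space_coins)
  case 0
  then show ?case using prob_le_1[of "survives 0"] by simp
next
  case (Suc n)
  have "measure coins (survives (Suc n)) = measure coins (survives n) - (measure coins (survives n))\<^sup>2 / 2"
    by (simp add: measure_survives_Suc power2_eq_square field_simps)
  also have "\<dots> \<le> 2 / (real n + 2 + 1)" using Suc by (intro halved_square_step_le) simp_all
  finally show ?case by (simp add: add.commute add.left_commute)
qed

definition gw_tree :: "(bool list \<Rightarrow> bool) \<Rightarrow> bool list set" where
  "gw_tree t = {u. \<forall>k<length u. t (take k u)}"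

lemma finite_gw_tree_of_not_survives: "t \<notin> survives n \<Longrightarrow> finite (gw_tree t)"
proof -
  assume t: "t \<notin> survives n"
  have "gw_tree t \<subseteq> {xs. set xs \<subseteq> UNIV \<and> length xs \<le> n}"
  proof
    fix u assume u: "u \<in> gw_tree t"
    have "length u < n"
    proof (rule ccontr)
      assume "\<not> length u < n"
      then have "length (take n u) = n" by simp
      moreover have "\<forall>k<n. t (take k (take n u))" using u \<open>\<not> length u < n\<close> by (auto simp: gw_tree_def)
      ultimately have "t \<in> survives n" unfolding survives_def space_coins by blast
      then show False using t by simp
    qed
    then show "u \<in> {xs. set xs \<subseteq> UNIV \<and> length xs \<le> n}" by simp
  qed
  moreover have "finite {xs :: bool list. set xs \<subseteq> UNIV \<and> length xs \<le> n}"
    by (rule finite_lists_length_le) simp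
  ultimately show ?thesis by (rule finite_subset)
qed

lemma AE_finite_gw_tree: "AE t in coins. finite (gw_tree t)"
proof -
  interpret T: prob_space "coins :: (bool list \<Rightarrow> bool) measure" by (rule prob_space_coins)
  let ?N = "\<Inter>n. survives n"
  have Ns: "?N \<in> sets coins" by measurable
  have le: "measure coins ?N \<le> 2 / (real n + 2)" for n
  proof -
    have "?N \<subseteq> survives n" by blast
    then show ?thesis using T.finite_measure_mono[OF _ survives_sets, of ?N n] measure_survives_le[of n] by linarith
  qed
  have "measure coins ?N = 0"
  proof (rule ccontr)
    assume "measure coins ?N \<noteq> 0"
    then have m: "0 < measure coins ?N" by (simp add: less_le)
    then obtain n where "2 < real n * measure coins ?N" using ex_less_of_nat_mult by blast
    then have "2 < (real n + 2) * measure coins ?N" using m by (simp add: distrib_right)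
    moreover have "(real n + 2) * measure coins ?N \<le> 2" using le[of n] by (simp add: field_simps)
    ultimately show False by simp
  qed
  then have "?N \<in> null_sets coins" using Ns by (simp add: T.emeasure_eq_measure null_setsI)
  moreover have "{t \<in> space coins. \<not> finite (gw_tree t)} \<subseteq> ?N"
    using finite_gw_tree_of_not_survives by blast
  ultimately show ?thesis by (rule AE_I')
qed

section \<open>The random tree\<close>

lemma AE_coins_reindex:
  fixes f :: "'i \<Rightarrow> 'j"
  assumes "inj f" and "AE y in coins. P y"
  shows "AE \<omega> in coins. P (\<lambda>i. \<omega> (f i))"
proof -
  let ?r = "\<lambda>\<omega>. \<lambda>i\<in>UNIV. \<omega> (f i)"
  have d: "distr coins coins ?r = coins"
    using distr_PiM_reindex[of UNIV "\<lambda>_. coin" f UNIV] assms(1) by (simp add: prob_space_measure_pmf)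
  have "AE y in distr coins coins ?r. P y" unfolding d by (rule assms(2))
  moreover have "?r \<in> measurable coins coins" by measurable
  ultimately have "AE \<omega> in coins. P (?r \<omega>)" by (rule AE_distrD[rotated])
  then show ?thesis by (simp add: restrict_def)
qed

lemma AE_spine_walk_unbounded_below: "AE \<omega> in rt_space. \<forall>M::nat. \<exists>n. spine_walk \<omega> n \<le> - int M"
proof -
  have "AE \<omega> in rt_space. \<forall>M::nat. \<exists>n. walk (\<lambda>i. \<omega> (Inl (i + 2))) n \<le> - int M"
    unfolding rt_space_def by (rule AE_coins_reindex[OF _ AE_walk_unbounded_below]) (simp add: inj_def)
  moreover have "walk (\<lambda>i. \<omega> (Inl (i + 2))) = spine_walk \<omega>" for \<omega>
    by (simp add: walk_def spine_walk_def Xv_def fun_eq_iff)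
  ultimately show ?thesis by simp
qed

lemma AE_finite_GW: "AE \<omega> in rt_space. finite (GW \<omega> i)"
proof -
  have "AE \<omega> in rt_space. finite (gw_tree (\<lambda>u. \<omega> (Inr (i, u))))"
    unfolding rt_space_def by (rule AE_coins_reindex[OF _ AE_finite_gw_tree]) (simp add: inj_def)
  moreover have "gw_tree (\<lambda>u. \<omega> (Inr (i, u))) = GW \<omega> i" for \<omega>
    by (simp add: gw_tree_def GW_def)
  ultimately show ?thesis by simp
qed

theorem mainTheorem1:
  shows "AE \<omega> in rt_space.
     (\<forall>\<kappa>\<in>corners (Aset \<omega>). \<exists>\<kappa>'\<in>corners (Aset \<omega>).
        cprec (Aset \<omega>) \<kappa> \<kappa>' \<and>
        label (Aset \<omega>) \<kappa>' \<le> label (Aset \<omega>) \<kappa> -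
          (if cprec (Aset \<omega>) \<kappa> (rho (Aset \<omega>)) \<and> cpreceq (Aset \<omega>) (rho (Aset \<omega>)) \<kappa>'
           then 6 else 0))
   \<and> (\<forall>\<kappa>\<in>corners (Aset \<omega>). is_bud_corner (Aset \<omega>) \<kappa> \<longrightarrow> attach_corner (Aset \<omega>) \<kappa> \<noteq> None)"
proof -
  have "AE \<omega> in rt_space. \<forall>i. finite (GW \<omega> i)"
    using AE_finite_GW by (subst AE_all_countable) blast
  with AE_spine_walk_unbounded_below show ?thesis
    by eventually_elim (rule contour_conclusions_Aset, blast+)
qed

end
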